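(* Assume the positive sequence $\alpha(n)$ is log-polynomial of some degree $m\ge2$ with data $\{A(n),\kappa,\delta(n)\}$. (i) If $\kappa=-1$, then $\alpha$ is asymptotically strictly log-concave. If $\kappa=1$, then $\alpha$ is asymptotically strictly log-convex. (ii) Fix $d$ with $1\le d\le m+1$. For all sufficiently large $n$, the zeros of $J_\alpha^{d,n}(X)$ and of $K_\alpha^{d,n}(X)$ are all distinct. If $\kappa=-1$, they are all real. If $\kappa=1$, they are all non-real, except for exactly one real zero when $d$ is odd.
   Context: Log-polynomial: let $m\ge2$ be an integer and $\kappa\in\{1,-1\}$. A sequence of positive reals $\alpha(n)$ is log-polynomial of degree $m$ with data $\{A(n),\kappa,\delta(n)\}$ if there are real sequences $A(n),\delta(n),g_k(n)$ ($3\le k\le m$) such that $$\log\left(\frac{\alpha(n+j)}{\alpha(n)}\right)=A(n)j+\kappa\delta(n)^2j^2+\sum_{k=3}^m g_k(n)j^k+o(\delta(n)^{m+1})\quad(n\to\infty)$$ for $j=1,\dots,m+1$. In addition, $\delta(n)>0$, $\delta(n)\to0$ and $g_k(n)=o(\delta(n)^k)$. Jensen polynomials: $J_\alpha^{d,n}(X)=\sum_{j=0}^d\binom{d}{j}\alpha(n+j)X^j$ and $K_\alpha^{d,n}(X)=X^dJ_\alpha^{d,n}(1/X)$. Asymptotically strictly log-concave means $\alpha(n+1)^2>\alpha(n)\alpha(n+2)$ for all large $n$. Asymptotically strictly log-convex means the reverse strict inequality holds for all large $n$. *)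

theory Defs
  imports "HOL-Analysis.Analysis" "HOL-Library.Landau_Symbols"
    "HOL-Computational_Algebra.Polynomial"
begin

definition log_polynomial ::
  "(nat \<Rightarrow> real) \<Rightarrow> nat \<Rightarrow> (nat \<Rightarrow> real) \<Rightarrow> real \<Rightarrow> (nat \<Rightarrow> real) \<Rightarrow> bool" where
  "log_polynomial \<alpha> m A \<kappa> \<delta> \<longleftrightarrow>
     m \<ge> 2 \<and> \<kappa> \<in> {1, -1} \<and> (\<forall>n. \<alpha> n > 0) \<and>
     (\<forall>n. \<delta> n > 0) \<and> \<delta> \<longlonglongrightarrow> 0 \<and>
     (\<exists>g :: nat \<Rightarrow> nat \<Rightarrow> real.
        (\<forall>k\<in>{3..m}. g k \<in> o[sequentially](\<lambda>n. \<delta> n ^ k)) \<and>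
        (\<forall>j\<in>{1..m+1}.
           (\<lambda>n. ln (\<alpha> (n + j) / \<alpha> n)
                 - (A n * real j + \<kappa> * \<delta> n ^ 2 * real j ^ 2
                    + (\<Sum>k=3..m. g k n * real j ^ k)))
           \<in> o[sequentially](\<lambda>n. \<delta> n ^ (m + 1))))"

definition jensen_J :: "(nat \<Rightarrow> real) \<Rightarrow> nat \<Rightarrow> nat \<Rightarrow> real poly" where
  "jensen_J \<alpha> d n = (\<Sum>j\<le>d. monom (real (d choose j) * \<alpha> (n + j)) j)"

definition jensen_K :: "(nat \<Rightarrow> real) \<Rightarrow> nat \<Rightarrow> nat \<Rightarrow> real poly" where
  "jensen_K \<alpha> d n = (\<Sum>j\<le>d. monom (real (d choose j) * \<alpha> (n + j)) (d - j))"

end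

theory Submission
  imports Defs "HOL-Computational_Algebra.Fundamental_Theorem_Algebra"
begin

text \<open>
  Write \<open>\<alpha> (n + j) / \<alpha> n = exp (A j + \<kappa> \<delta>\<^sup>2 j\<^sup>2 + \<dots>)\<close>. The second difference of
  \<open>ln \<alpha>\<close> is then \<open>-2 \<kappa> \<delta>\<^sup>2 + o(\<delta>\<^sup>2)\<close>, which gives the log-concavity statements.

  For the zeros, the substitution \<open>X = exp (-A) (\<delta> u - 1)\<close> turns the Jensen polynomial
  \<open>J\<close> into \<open>\<alpha> n \<delta>\<^sup>d F(u)\<close>, where the coefficients of \<open>F\<close> are binomial multiples of
  finite differences of \<open>exp (\<kappa> \<delta>\<^sup>2 j\<^sup>2 + \<dots>)\<close> divided by powers of \<open>\<delta>\<close>. As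
  \<open>n \<rightarrow> \<infinity>\<close> they converge to the coefficients of the Hermite-type polynomial \<open>H\<close> with
  generating function \<open>exp (x t + \<kappa> t\<^sup>2)\<close>. For \<open>\<kappa> = -1\<close> the recurrence
  \<open>H\<^sub>d\<^sub>+\<^sub>1 = x H\<^sub>d - 2 H\<^sub>d'\<close> makes the zeros of consecutive \<open>H\<^sub>d\<close> interlace, so all
  of them are real and simple; for \<open>\<kappa> = 1\<close> the zeros are those for \<open>\<kappa> = -1\<close> rotated
  by \<open>\<i>\<close>. Simple zeros depend continuously on the coefficients, and by conjugation
  symmetry simple real zeros stay real and non-real ones stay non-real; so \<open>F\<close>, hence
  \<open>J\<close> and its reversal \<open>K\<close>, eventually have the zero configuration of \<open>H\<close>.
\<close>

abbreviation cpoly :: "real poly \<Rightarrow> complex poly" where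
  "cpoly p \<equiv> map_poly complex_of_real p"

abbreviation croots :: "real poly \<Rightarrow> complex set" where
  "croots p \<equiv> {z. poly (cpoly p) z = 0}"

lemma degree_cpoly [simp]: "degree (cpoly p) = degree p"
  by (rule degree_map_poly) simp

lemma coeff_cpoly [simp]: "coeff (cpoly p) n = complex_of_real (coeff p n)"
  by (simp add: coeff_map_poly)

lemma cpoly_eq_0_iff [simp]: "cpoly p = 0 \<longleftrightarrow> p = 0"
  by (metis degree_cpoly coeff_cpoly leading_coeff_0_iff of_real_eq_0_iff)

lemma cpoly_sum: "cpoly (sum f A) = (\<Sum>i\<in>A. cpoly (f i))"
  by (rule poly_eqI) (simp add: coeff_sum)

lemma poly_cpoly_cnj: "poly (cpoly p) (cnj z) = cnj (poly (cpoly p) z)"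
  by (subst poly_cnj_real) auto

lemma poly_cpoly_of_real: "poly (cpoly p) (complex_of_real x) = complex_of_real (poly p x)"
  by (simp add: poly_altdef)

lemma finite_croots: "p \<noteq> 0 \<Longrightarrow> finite (croots p)"
  by (simp add: poly_roots_finite)

lemma card_croots_le_degree: "p \<noteq> 0 \<Longrightarrow> card (croots p) \<le> degree p"
  using card_poly_roots_bound[of "cpoly p"] by simp

lemma poly_eq_sum_coeffs_upto:
  fixes p :: "'a::comm_ring_1 poly"
  assumes "degree p \<le> N"
  shows "poly p x = (\<Sum>i\<le>N. coeff p i * x ^ i)"
proof -
  have "poly p x = poly (\<Sum>i\<le>N. monom (coeff p i) i) x"
    using poly_as_sum_of_monoms'[OF assms] by simp
  then show ?thesis by (simp add: poly_sum poly_monom mult.commute)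
qed

lemma rsquarefree_if_card_roots_eq_degree:
  fixes p :: "'a::idom poly"
  assumes "p \<noteq> 0" "card {x. poly p x = 0} = degree p"
  shows "rsquarefree p"
proof -
  let ?R = "{x. poly p x = 0}"
  have fin: "finite ?R" using assms(1) poly_roots_finite by blast
  have pos: "1 \<le> order x p" if "x \<in> ?R" for x
    using that assms(1) by (simp add: order_root Suc_le_eq)
  have "(\<Sum>x\<in>?R. order x p) \<le> (\<Sum>x\<in>?R. 1)"
    using sum_order_le_degree[OF assms(1)] assms(2) by simp
  moreover have "(\<Sum>x\<in>?R. 1) < (\<Sum>x\<in>?R. order x p)" if "x \<in> ?R" "order x p \<noteq> 1" for x
    by (rule sum_strict_mono_ex1[OF fin]) (use that pos le_neq_implies_less in fastforce)+
  ultimately have "\<forall>x\<in>?R. order x p = 1" by force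
  then show ?thesis unfolding rsquarefree_def using assms(1) by (auto simp: order_root)
qed

lemma rsquarefree_cpoly_if_card_croots:
  assumes "p \<noteq> 0" "card (croots p) = degree p"
  shows "rsquarefree (cpoly p)"
  by (rule rsquarefree_if_card_roots_eq_degree) (use assms in simp_all)

lemma croots_subset_Reals_if_card_eq:
  assumes "p \<noteq> 0" "card (croots p \<inter> \<real>) = card (croots p)"
  shows "croots p \<subseteq> \<real>"
  using card_subset_eq[of "croots p" "croots p \<inter> \<real>"] finite_croots[OF assms(1)] assms(2) by auto

lemma croots_eq_image_real_roots:
  fixes p :: "real poly"
  assumes "p \<noteq> 0" "card {x. poly p x = 0} = degree p"
  shows "croots p = complex_of_real ` {x. poly p x = 0}"
proof -
  have sub: "complex_of_real ` {x. poly p x = 0} \<subseteq> croots p"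
    by (auto simp: poly_cpoly_of_real)
  have "card (complex_of_real ` {x. poly p x = 0}) = degree p"
    using assms(2) by (subst card_image) (auto intro: inj_onI)
  then have "complex_of_real ` {x. poly p x = 0} = croots p"
    using card_croots_le_degree[OF assms(1)] by (intro card_seteq[OF finite_croots[OF assms(1)] sub]) simp
  then show ?thesis by simp
qed

lemma card_image_Int_Reals:
  fixes f :: "complex \<Rightarrow> complex"
  assumes "inj f" "\<And>z. f z \<in> \<real> \<longleftrightarrow> z \<in> \<real>"
  shows "card (f ` A) = card A" "card (f ` A \<inter> \<real>) = card (A \<inter> \<real>)"
proof -
  have "f ` A \<inter> \<real> = f ` (A \<inter> \<real>)" using assms(2) by auto
  then show "card (f ` A) = card A" "card (f ` A \<inter> \<real>) = card (A \<inter> \<real>)"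
    using assms(1) by (simp_all add: card_image inj_on_subset)
qed

lemma affine_of_real_in_Reals_iff:
  fixes a b :: real
  assumes "a \<noteq> 0"
  shows "complex_of_real a * z + of_real b \<in> \<real> \<longleftrightarrow> z \<in> \<real>"
proof
  assume "complex_of_real a * z + of_real b \<in> \<real>"
  then have "(complex_of_real a * z + of_real b - of_real b) / of_real a \<in> \<real>"
    by (intro Reals_divide Reals_diff) auto
  then show "z \<in> \<real>" using assms by simp
qed auto

lemma inj_affine_of_real:
  fixes a b :: real
  assumes "a \<noteq> 0"
  shows "inj (\<lambda>z. complex_of_real a * z + of_real b)"
  using assms by (intro injI) simp

lemma croots_affine:
  fixes p q :: "real poly" and a b c :: real
  assumes "a \<noteq> 0" "c \<noteq> 0"
    and "\<And>u. poly (cpoly p) (of_real a * u + of_real b) = of_real c * poly (cpoly q) u"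
  shows "croots p = (\<lambda>u. of_real a * u + of_real b) ` croots q"
proof (intro set_eqI iffI)
  let ?h = "\<lambda>u. complex_of_real a * u + of_real b"
  have root_iff: "?h u \<in> croots p \<longleftrightarrow> u \<in> croots q" for u
    using assms(2,3) by simp
  fix z
  show "z \<in> ?h ` croots q" if "z \<in> croots p"
  proof (rule rev_image_eqI)
    show "z = ?h ((z - of_real b) / of_real a)" using assms(1) by simp
    then show "(z - of_real b) / of_real a \<in> croots q" using that root_iff by metis
  qed
  show "z \<in> croots p" if "z \<in> ?h ` croots q" using that root_iff by blast
qed

lemma cpoly_reflect_poly: "cpoly (reflect_poly p) = reflect_poly (cpoly p)"
  by (rule poly_eqI) (simp add: coeff_reflect_poly)

lemma croots_reflect_poly:
  assumes "coeff p 0 \<noteq> 0"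
  shows "croots (reflect_poly p) = inverse ` croots p"
proof (intro set_eqI iffI)
  have "p \<noteq> 0" using assms by (metis coeff_0)
  then have nz: "0 \<notin> croots p" "0 \<notin> croots (reflect_poly p)"
    using assms by (simp_all add: poly_0_coeff_0 cpoly_reflect_poly)
  have iff: "z \<in> croots (reflect_poly p) \<longleftrightarrow> inverse z \<in> croots p" if "z \<noteq> 0" for z
    using that by (simp add: cpoly_reflect_poly poly_reflect_poly_nz)
  fix z
  show "z \<in> inverse ` croots p" if z: "z \<in> croots (reflect_poly p)"
  proof (rule rev_image_eqI)
    have "z \<noteq> 0" using z nz(2) by metis
    then show "inverse z \<in> croots p" using iff z by metis
  qed simp
  show "z \<in> croots (reflect_poly p)" if z: "z \<in> inverse ` croots p"
  proof -
    obtain y where y: "y \<in> croots p" "z = inverse y" using z by blast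
    then have "y \<noteq> 0" using nz(1) by metis
    then show ?thesis using iff[of z] y by simp
  qed
qed

section \<open>Continuity of the roots\<close>

lemma exists_root_near:
  fixes p :: "complex poly"
  assumes "p \<noteq> 0" "e > 0" "norm (poly p z) < norm (lead_coeff p) * e ^ degree p"
  shows "\<exists>w. poly p w = 0 \<and> norm (w - z) < e"
proof (rule ccontr)
  assume far: "\<not> ?thesis"
  obtain r where r: "smult (lead_coeff p) (\<Prod>i<degree p. [:-r i, 1:]) = p"
    using complex_poly_decompose' by blast
  have poly_p: "poly p x = lead_coeff p * (\<Prod>i<degree p. x - r i)" for x
    by (subst r[symmetric]) (simp add: poly_prod)
  have "e \<le> norm (z - r i)" if "i < degree p" for i
  proof -
    have "poly p (r i) = 0" unfolding poly_p using that by (auto intro: prod_zero)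
    then show ?thesis using far by (metis linorder_not_le norm_minus_commute)
  qed
  then have "e ^ degree p \<le> (\<Prod>i<degree p. norm (z - r i))"
    using prod_mono[of "{..<degree p}" "\<lambda>_. e"] assms(2) by simp
  then have "norm (lead_coeff p) * e ^ degree p \<le> norm (poly p z)"
    unfolding poly_p by (simp add: norm_mult prod_norm mult_left_mono)
  then show False using assms(3) by simp
qed

lemma root_separation_radius:
  fixes R :: "complex set"
  assumes "finite R"
  obtains e where "e > 0"
    "\<And>z z'. z \<in> R \<Longrightarrow> z' \<in> R \<Longrightarrow> z \<noteq> z' \<Longrightarrow> 2 * e \<le> norm (z - z')"
    "\<And>z. z \<in> R \<Longrightarrow> z \<notin> \<real> \<Longrightarrow> e \<le> \<bar>Im z\<bar>"
proof -
  define S where "S = insert 1 ((\<lambda>(z, z'). norm (z - z') / 2) ` {(z, z') \<in> R \<times> R. z \<noteq> z'}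
                     \<union> (\<lambda>z. \<bar>Im z\<bar>) ` (R - \<real>))"
  have "finite S" unfolding S_def
    using assms by (auto intro: finite_subset[of _ "R \<times> R"])
  moreover have "\<forall>x\<in>S. x > 0" unfolding S_def by (auto simp: complex_is_Real_iff)
  ultimately have "Min S > 0" by (simp add: S_def)
  moreover have "2 * Min S \<le> norm (z - z')" if "z \<in> R" "z' \<in> R" "z \<noteq> z'" for z z'
  proof -
    have "norm (z - z') / 2 \<in> S" unfolding S_def using that by force
    then show ?thesis using \<open>finite S\<close> Min_le by fastforce
  qed
  moreover have "Min S \<le> \<bar>Im z\<bar>" if "z \<in> R" "z \<notin> \<real>" for z
    using \<open>finite S\<close> that by (intro Min_le) (auto simp: S_def)
  ultimately show ?thesis using that by blast
qed

lemma eq_if_near_both: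
  fixes x z z' :: complex
  assumes "z \<noteq> z' \<Longrightarrow> 2 * e \<le> norm (z - z')" "norm (x - z) < e" "norm (x - z') < e"
  shows "z = z'"
proof (rule ccontr)
  assume "z \<noteq> z'"
  moreover have "norm (z - z') \<le> norm (x - z) + norm (x - z')"
    by (metis norm_diff_triangle_le norm_minus_commute order_refl)
  ultimately show False using assms by simp
qed

lemma roots_near_bijection:
  fixes p q :: "complex poly"
  assumes "p \<noteq> 0" "q \<noteq> 0" "e > 0"
    and card_eq: "card {z. poly q z = 0} = degree p"
    and sep: "\<And>z z'. poly q z = 0 \<Longrightarrow> poly q z' = 0 \<Longrightarrow> z \<noteq> z' \<Longrightarrow> 2 * e \<le> norm (z - z')"
    and small: "\<And>z. poly q z = 0 \<Longrightarrow> norm (poly p z) < norm (lead_coeff p) * e ^ degree p"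
  obtains w where "bij_betw w {z. poly q z = 0} {z. poly p z = 0}"
    "\<And>z. poly q z = 0 \<Longrightarrow> norm (w z - z) < e"
proof -
  let ?Q = "{z. poly q z = 0}" and ?P = "{z. poly p z = 0}"
  have "\<exists>w. poly p w = 0 \<and> norm (w - z) < e" if "z \<in> ?Q" for z
    using exists_root_near[OF assms(1,3) small] that by simp
  then obtain w where w: "\<And>z. z \<in> ?Q \<Longrightarrow> poly p (w z) = 0 \<and> norm (w z - z) < e"
    by metis
  have inj: "inj_on w ?Q"
    by (rule inj_onI) (metis eq_if_near_both sep w mem_Collect_eq)
  have "card (w ` ?Q) = degree p" using card_image[OF inj] card_eq by simp
  moreover have "card ?P \<le> degree p" using card_poly_roots_bound[OF assms(1)] .
  moreover have "w ` ?Q \<subseteq> ?P" using w by auto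
  ultimately have "w ` ?Q = ?P"
    using poly_roots_finite[OF assms(1)] by (metis card_seteq)
  then show ?thesis using that inj w by (simp add: bij_betw_def)
qed

lemma card_real_roots_eq_if_near:
  fixes p q :: "real poly"
  assumes bij: "bij_betw w (croots q) (croots p)"
    and near: "\<And>z. z \<in> croots q \<Longrightarrow> norm (w z - z) < e"
    and sep: "\<And>z z'. z \<in> croots q \<Longrightarrow> z' \<in> croots q \<Longrightarrow> z \<noteq> z' \<Longrightarrow> 2 * e \<le> norm (z - z')"
    and im: "\<And>z. z \<in> croots q \<Longrightarrow> z \<notin> \<real> \<Longrightarrow> e \<le> \<bar>Im z\<bar>"
  shows "card (croots p \<inter> \<real>) = card (croots q \<inter> \<real>)"
proof -
  have real_iff: "w z \<in> \<real> \<longleftrightarrow> z \<in> \<real>" if z: "z \<in> croots q" for z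
  proof
    assume "z \<in> \<real>"
    have "cnj (w z) \<in> croots p"
      using z bij by (auto simp: poly_cpoly_cnj bij_betw_def)
    then obtain z' where z': "z' \<in> croots q" "cnj (w z) = w z'"
      using bij by (metis bij_betw_def imageE)
    have "norm (w z' - z) = norm (w z - z)"
      using \<open>z \<in> \<real>\<close> z'(2) by (metis Reals_cnj_iff complex_cnj_diff complex_mod_cnj)
    then have "z = z'"
      using eq_if_near_both[OF sep[OF z z'(1)], of "w z'"] near[OF z] near[OF z'(1)] by simp
    then show "w z \<in> \<real>" using z'(2) by (simp add: Reals_cnj_iff)
  next
    assume "w z \<in> \<real>"
    then have "\<bar>Im z\<bar> \<le> norm (w z - z)"
      using abs_Im_le_cmod[of "w z - z"] by (simp add: complex_is_Real_iff)
    then show "z \<in> \<real>" using im[OF z] near[OF z] by fastforce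
  qed
  have "croots p = w ` croots q" using bij by (simp add: bij_betw_def)
  then have "croots p \<inter> \<real> = w ` (croots q \<inter> \<real>)"
    using real_iff by (simp add: image_Int_subset set_eq_iff image_iff) blast
  moreover have "inj_on w (croots q \<inter> \<real>)"
    using bij by (auto simp: bij_betw_def intro: inj_on_subset)
  ultimately show ?thesis by (simp add: card_image)
qed

lemma tendsto_poly_cpoly:
  fixes F :: "nat \<Rightarrow> real poly"
  assumes "\<And>n. degree (F n) \<le> N" "degree Q \<le> N"
    and "\<And>k. (\<lambda>n. coeff (F n) k) \<longlonglongrightarrow> coeff Q k"
  shows "(\<lambda>n. poly (cpoly (F n)) z) \<longlonglongrightarrow> poly (cpoly Q) z"
  using assms by (simp add: poly_eq_sum_coeffs_upto[of _ N]) (intro tendsto_intros)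

lemma eventually_roots_like_limit:
  fixes F :: "nat \<Rightarrow> real poly" and Q :: "real poly"
  assumes "Q \<noteq> 0" and card_Q: "card (croots Q) = degree Q"
    and deg: "\<And>n. degree (F n) \<le> degree Q"
    and lim: "\<And>k. (\<lambda>n. coeff (F n) k) \<longlonglongrightarrow> coeff Q k"
  shows "\<forall>\<^sub>F n in sequentially. F n \<noteq> 0 \<and> degree (F n) = degree Q
      \<and> card (croots (F n)) = degree Q \<and> card (croots (F n) \<inter> \<real>) = card (croots Q \<inter> \<real>)"
proof -
  let ?d = "degree Q"
  obtain e where e: "e > 0"
    "\<And>z z'. z \<in> croots Q \<Longrightarrow> z' \<in> croots Q \<Longrightarrow> z \<noteq> z' \<Longrightarrow> 2 * e \<le> norm (z - z')"
    "\<And>z. z \<in> croots Q \<Longrightarrow> z \<notin> \<real> \<Longrightarrow> e \<le> \<bar>Im z\<bar>"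
    using root_separation_radius[OF finite_croots[OF \<open>Q \<noteq> 0\<close>]] by blast
  have lead: "\<forall>\<^sub>F n in sequentially. coeff (F n) ?d \<noteq> 0"
    using tendsto_imp_eventually_ne[OF lim[of ?d]] \<open>Q \<noteq> 0\<close> by simp
  have small: "\<forall>\<^sub>F n in sequentially. \<forall>z\<in>croots Q.
      norm (poly (cpoly (F n)) z) < \<bar>coeff (F n) ?d\<bar> * e ^ ?d"
  proof (rule eventually_ball_finite[OF finite_croots[OF \<open>Q \<noteq> 0\<close>]], intro ballI)
    fix z assume "z \<in> croots Q"
    then have pos: "0 < \<bar>coeff Q ?d\<bar> * e ^ ?d - norm (poly (cpoly Q) z)"
      using \<open>Q \<noteq> 0\<close> e(1) by simp
    have "(\<lambda>n. \<bar>coeff (F n) ?d\<bar> * e ^ ?d - norm (poly (cpoly (F n)) z)) \<longlonglongrightarrow>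
        \<bar>coeff Q ?d\<bar> * e ^ ?d - norm (poly (cpoly Q) z)"
      by (intro tendsto_intros lim tendsto_poly_cpoly[OF deg]) simp
    from order_tendstoD(1)[OF this pos]
    show "\<forall>\<^sub>F n in sequentially. norm (poly (cpoly (F n)) z) < \<bar>coeff (F n) ?d\<bar> * e ^ ?d"
      by eventually_elim simp
  qed
  show ?thesis
    using lead small
  proof eventually_elim
    case (elim n)
    have deg_n: "degree (F n) = ?d" using elim(1) deg[of n] le_degree by (metis antisym)
    have "F n \<noteq> 0" using elim(1) by auto
    obtain w where w: "bij_betw w (croots Q) (croots (F n))"
      "\<And>z. z \<in> croots Q \<Longrightarrow> norm (w z - z) < e"
      by (rule roots_near_bijection[of "cpoly (F n)" "cpoly Q" e])
        (use \<open>F n \<noteq> 0\<close> \<open>Q \<noteq> 0\<close> e card_Q deg_n elim(2) in auto)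
    have "card (croots (F n)) = ?d" using bij_betw_same_card[OF w(1)] card_Q by simp
    moreover have "card (croots (F n) \<inter> \<real>) = card (croots Q \<inter> \<real>)"
      by (rule card_real_roots_eq_if_near[OF w e(2,3)])
    ultimately show ?case using \<open>F n \<noteq> 0\<close> deg_n by blast
  qed
qed

section \<open>Counting real roots by sign changes\<close>

lemma card_roots_ge_of_alternating_signs:
  fixes p :: "real poly" and x :: "nat \<Rightarrow> real"
  assumes "p \<noteq> 0" and incr: "\<And>i. i < n \<Longrightarrow> x i < x (Suc i)"
    and sign: "\<And>i. i \<le> n \<Longrightarrow> (-1) ^ (n - i) * poly p (x i) > 0"
  shows "n \<le> card {t. poly p t = 0}"
proof -
  have change: "poly p (x i) * poly p (x (Suc i)) < 0" if "i < n" for i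
  proof -
    have "0 < ((-1) ^ (n - i) * poly p (x i)) * ((-1) ^ (n - Suc i) * poly p (x (Suc i)))"
      using sign[of i] sign[of "Suc i"] that by simp
    also have "(-1::real) ^ (n - i) = - ((-1) ^ (n - Suc i))"
      using that by (simp add: Suc_diff_Suc[symmetric])
    also have "(-1::real) ^ (n - Suc i) * (-1) ^ (n - Suc i) = 1"
      by (simp add: power_add[symmetric])
    ultimately show ?thesis by (simp add: algebra_simps)
  qed
  have "\<exists>t. x i < t \<and> t < x (Suc i) \<and> poly p t = 0" if "i < n" for i
    using poly_IVT[OF incr[OF that] change[OF that]] by blast
  then obtain r where r: "\<And>i. i < n \<Longrightarrow> x i < r i \<and> r i < x (Suc i) \<and> poly p (r i) = 0"
    by metis
  have x_mono: "x i \<le> x j" if "i \<le> j" "j \<le> n" for i j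
    using that
  proof (induction j rule: dec_induct)
    case (step k)
    then have "x k < x (Suc k)" by (intro incr) simp
    moreover have "x i \<le> x k" using step by simp
    ultimately show ?case by simp
  qed simp
  have "strict_mono_on {..<n} r"
  proof (rule strict_mono_onI)
    fix i j assume "i \<in> {..<n}" "j \<in> {..<n}" "i < j"
    then have "x (Suc i) \<le> x j" using x_mono[of "Suc i" j] by simp
    then show "r i < r j" using r[of i] r[of j] \<open>i \<in> {..<n}\<close> \<open>j \<in> {..<n}\<close> by fastforce
  qed
  then have "n = card (r ` {..<n})" by (simp add: card_image strict_mono_on_imp_inj_on)
  also have "\<dots> \<le> card {t. poly p t = 0}"
    using r by (intro card_mono poly_roots_finite assms(1)) auto
  finally show ?thesis .
qed

lemma card_roots_ge_of_sign_interlacing: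
  fixes p :: "real poly" and xs :: "real list"
  assumes "p \<noteq> 0" and sorted: "sorted_wrt (<) xs"
    and at_xs: "\<And>i. i < length xs \<Longrightarrow> (-1) ^ (length xs - i) * poly p (xs ! i) > 0"
    and at_top: "\<forall>\<^sub>F x in at_top. poly p x > 0"
    and at_bot: "\<forall>\<^sub>F x in at_bot. (-1) ^ Suc (length xs) * poly p x > 0"
  shows "Suc (length xs) \<le> card {t. poly p t = 0}"
proof -
  let ?n = "length xs"
  have "\<forall>\<^sub>F x in at_top. poly p x > 0 \<and> (\<forall>s\<in>set xs. s < x)"
    using at_top by (intro eventually_conj eventually_ball_finite) (auto intro: eventually_gt_at_top)
  then obtain b where b: "poly p b > 0" "\<And>s. s \<in> set xs \<Longrightarrow> s < b"
    using eventually_happens'[OF trivial_limit_at_top_linorder] by blast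
  have "\<forall>\<^sub>F x in at_bot. (-1) ^ Suc ?n * poly p x > 0 \<and> (\<forall>s\<in>set xs. x < s) \<and> x < b"
    using at_bot by (intro eventually_conj eventually_ball_finite) (auto intro: eventually_gt_at_bot)
  then obtain a where a: "(-1) ^ Suc ?n * poly p a > 0" "\<And>s. s \<in> set xs \<Longrightarrow> a < s" "a < b"
    using eventually_happens'[OF trivial_limit_at_bot_linorder] by blast
  define x where "x i = (if i = 0 then a else if i \<le> ?n then xs ! (i - 1) else b)" for i
  show ?thesis
  proof (rule card_roots_ge_of_alternating_signs[OF \<open>p \<noteq> 0\<close>])
    fix i assume "i < Suc ?n"
    then consider "i = 0" "?n = 0" | "i = 0" "?n > 0" | "0 < i" "i < ?n" | "0 < i" "i = ?n"
      unfolding less_Suc_eq by blast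
    then show "x i < x (Suc i)"
      by cases (use a b sorted_wrt_nth_less[OF sorted, of "i - 1" i] in \<open>auto simp: x_def\<close>)
  next
    fix i assume "i \<le> Suc ?n"
    then consider "i = 0" | "0 < i" "i \<le> ?n" | "i = Suc ?n" by linarith
    then show "(-1) ^ (Suc ?n - i) * poly p (x i) > 0"
    proof cases
      case 2
      then show ?thesis using at_xs[of "i - 1"] by (simp add: x_def Suc_diff_le)
    qed (use a b in \<open>simp_all add: x_def\<close>)
  qed
qed

lemma card_greater_nth_sorted_list_of_set:
  fixes S :: "'a::linorder set"
  assumes "finite S" "i < card S"
  shows "card {x\<in>S. sorted_list_of_set S ! i < x} = card S - Suc i"
proof -
  let ?xs = "sorted_list_of_set S"
  have sorted: "sorted_wrt (<) ?xs" and len: "length ?xs = card S" and set: "set ?xs = S"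
    using assms(1) by auto
  have "{x\<in>S. ?xs ! i < x} = (!) ?xs ` {Suc i..<card S}"
  proof (intro set_eqI iffI)
    fix x assume x: "x \<in> {x\<in>S. ?xs ! i < x}"
    then have "x \<in> set ?xs" using set by simp
    then obtain j where j: "j < card S" "x = ?xs ! j"
      using len by (metis in_set_conv_nth)
    have "\<not> j \<le> i"
      using x j sorted_wrt_nth_less[OF sorted, of j i] len assms(2) by (cases "j = i") auto
    then show "x \<in> (!) ?xs ` {Suc i..<card S}" using j by auto
  next
    fix x assume "x \<in> (!) ?xs ` {Suc i..<card S}"
    then show "x \<in> {x\<in>S. ?xs ! i < x}"
      using sorted_wrt_nth_less[OF sorted, of i] len set by auto
  qed
  moreover have "inj_on ((!) ?xs) {Suc i..<card S}"
    using len by (intro inj_on_nth) (auto simp: strict_sorted_iff[symmetric] sorted)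
  ultimately show ?thesis by (simp add: card_image)
qed

lemma monic_eq_prod_roots:
  fixes p :: "real poly"
  assumes "degree p = card S" "lead_coeff p = 1" "finite S" "\<And>x. x \<in> S \<Longrightarrow> poly p x = 0"
  shows "p = (\<Prod>x\<in>S. [:-x, 1:])"
proof (rule poly_eqI_degree_lead_coeff[of p "card S" _ S])
  have "degree (\<Prod>x\<in>S. [:-x, 1:]) = card S" using assms(3) by (simp add: degree_prod_sum_eq)
  moreover have "lead_coeff (\<Prod>x\<in>S. [:-x, 1:]) = 1" by (simp add: lead_coeff_prod)
  ultimately show "coeff p (card S) = coeff (\<Prod>x\<in>S. [:-x, 1:]) (card S)"
    using assms(1,2) by simp
  show "degree (\<Prod>x\<in>S. [:-x, 1:]) \<le> card S"
    using \<open>degree (\<Prod>x\<in>S. [:-x, 1:]) = card S\<close> by simp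
  show "poly p z = poly (\<Prod>x\<in>S. [:-x, 1:]) z" if "z \<in> S" for z
    using assms(3,4) that by (auto simp: poly_prod intro!: prod_zero[symmetric])
qed (use assms in auto)

lemma poly_pderiv_prod_at_root:
  fixes S :: "real set"
  assumes "finite S" "s \<in> S"
  shows "poly (pderiv (\<Prod>x\<in>S. [:-x, 1:])) s = (\<Prod>x\<in>S-{s}. s - x)"
proof -
  have "poly (pderiv (\<Prod>x\<in>S. [:-x, 1:])) s = (\<Sum>a\<in>S. \<Prod>x\<in>S-{a}. s - x)"
    by (simp add: pderiv_prod poly_sum poly_prod pderiv_pCons)
  also have "\<dots> = (\<Prod>x\<in>S-{s}. s - x)"
    using assms by (subst sum.remove[OF assms]) (auto intro!: sum.neutral prod_zero)
  finally show ?thesis .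
qed

lemma sign_prod_diff:
  fixes S :: "real set"
  assumes "finite S"
  shows "(-1) ^ card {x\<in>S. s < x} * (\<Prod>x\<in>S-{s}. s - x) > 0"
proof -
  define U where "U = {x\<in>S. s < x}"
  define L where "L = {x\<in>S. x < s}"
  have "S - {s} = L \<union> U" "L \<inter> U = {}" "finite L" "finite U"
    using assms unfolding U_def L_def by auto
  then have "(\<Prod>x\<in>S-{s}. s - x) = (\<Prod>x\<in>L. s - x) * (\<Prod>x\<in>U. - (x - s))"
    by (simp add: prod.union_disjoint)
  also have "\<dots> = (-1) ^ card U * ((\<Prod>x\<in>L. s - x) * (\<Prod>x\<in>U. x - s))"
    by (simp only: prod_uminus ac_simps)
  finally have "(-1) ^ card U * (\<Prod>x\<in>S-{s}. s - x)
      = ((-1) ^ card U * (-1) ^ card U) * ((\<Prod>x\<in>L. s - x) * (\<Prod>x\<in>U. x - s))"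
    by (simp only: ac_simps)
  moreover have "(-1::real) ^ card U * (-1) ^ card U = 1"
    by (simp add: power_add[symmetric])
  moreover have "(\<Prod>x\<in>L. s - x) * (\<Prod>x\<in>U. x - s) > 0"
    by (intro mult_pos_pos prod_pos) (auto simp: L_def U_def)
  ultimately show ?thesis unfolding U_def by simp
qed

section \<open>Hermite polynomials\<close>

text \<open>\<open>gauss_coeff \<kappa> l\<close> is the coefficient of \<open>t\<^sup>l\<close> in \<open>exp (\<kappa> t\<^sup>2)\<close>, and
  \<open>hermite \<kappa> d\<close> is \<open>d!\<close> times the coefficient of \<open>t\<^sup>d\<close> in \<open>exp (x t + \<kappa> t\<^sup>2)\<close>;
  \<open>hermite (-1) d x = 2\<^sup>d\<^sup>/\<^sup>2 He\<^sub>d (x / sqrt 2)\<close> in terms of the probabilists'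
  Hermite polynomials.\<close>

definition gauss_coeff :: "real \<Rightarrow> nat \<Rightarrow> real" where
  "gauss_coeff \<kappa> l = (if even l then \<kappa> ^ (l div 2) / fact (l div 2) else 0)"

definition hermite :: "real \<Rightarrow> nat \<Rightarrow> real poly" where
  "hermite \<kappa> d = (\<Sum>k\<le>d. monom (fact d / fact k * gauss_coeff \<kappa> (d - k)) k)"

lemma gauss_coeff_rec: "real l * gauss_coeff (-1) l = - 2 * gauss_coeff (-1) (l - 2)"
  if "l \<ge> 2"
proof (cases "even l")
  case True
  then obtain r where "l = 2 * r" by blast
  with that obtain s where l: "l = 2 * Suc s" by (cases r) auto
  then have "gauss_coeff (-1) l = - gauss_coeff (-1) (l - 2) / real (Suc s)"
    by (simp add: gauss_coeff_def divide_divide_eq_left mult.commute)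
  moreover have "real l = 2 * real (Suc s)" using l by simp
  ultimately show ?thesis by (simp del: of_nat_Suc)
qed (use that in \<open>simp add: gauss_coeff_def\<close>)

lemma gauss_coeff_odd [simp]: "odd l \<Longrightarrow> gauss_coeff \<kappa> l = 0"
  by (simp add: gauss_coeff_def)

lemma coeff_hermite:
  "coeff (hermite \<kappa> d) k = (if k \<le> d then fact d / fact k * gauss_coeff \<kappa> (d - k) else 0)"
  unfolding hermite_def by (auto simp: coeff_sum)

lemma degree_hermite [simp]: "degree (hermite \<kappa> d) = d"
  by (intro antisym degree_le le_degree) (auto simp: coeff_hermite gauss_coeff_def)

lemma coeff_hermite_top [simp]: "coeff (hermite \<kappa> d) d = 1"
  by (simp add: coeff_hermite gauss_coeff_def)

lemma hermite_neq_0 [simp]: "hermite \<kappa> d \<noteq> 0"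
  using coeff_hermite_top by (metis degree_hermite leading_coeff_0_iff one_neq_zero)

lemma hermite_rec:
  "hermite (-1) (Suc d) = pCons 0 (hermite (-1) d) - smult 2 (pderiv (hermite (-1) d))"
proof (rule poly_eqI)
  fix k
  let ?g = "gauss_coeff (-1)" and ?c = "fact d / fact k :: real" and ?l = "Suc d - k"
  show "coeff (hermite (-1) (Suc d)) k = coeff (pCons 0 (hermite (-1) d) - smult 2 (pderiv (hermite (-1) d))) k"
  proof (cases "k \<le> Suc d")
    case False
    then show ?thesis by (simp add: coeff_hermite coeff_pCons coeff_pderiv split: nat.split)
  next
    case True
    have shift: "coeff (pCons 0 (hermite (-1) d)) k = real k * ?c * ?g ?l"
    proof (cases k)
      case (Suc k')
      then have "fact k = real k * (fact k' :: real)" by simp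
      then show ?thesis using True Suc by (simp add: coeff_hermite)
    qed simp
    have deriv: "coeff (smult 2 (pderiv (hermite (-1) d))) k = - real ?l * ?c * ?g ?l"
    proof (cases "?l \<ge> 2")
      case True
      then have "d - Suc k = ?l - 2" "Suc k \<le> d" by auto
      then have "coeff (smult 2 (pderiv (hermite (-1) d))) k = 2 * ?c * ?g (?l - 2)"
        by (simp add: coeff_pderiv coeff_hermite field_simps del: of_nat_Suc)
      also have "\<dots> = - real ?l * ?c * ?g ?l"
        using gauss_coeff_rec[OF True] by (simp add: algebra_simps)
      finally show ?thesis .
    next
      case False
      then have "?l = 0 \<or> ?l = 1" by linarith
      then have "real ?l * ?g ?l = 0" by auto
      then show ?thesis using False by (simp add: coeff_pderiv coeff_hermite)
    qed
    have "fact (Suc d) / fact k = (real k + real ?l) * ?c" using True by (simp add: of_nat_diff)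
    then show ?thesis using True shift deriv by (simp add: coeff_hermite algebra_simps)
  qed
qed

lemma poly_hermite_minus: "poly (hermite \<kappa> d) (- x) = (-1) ^ d * poly (hermite \<kappa> d) x"
proof -
  have "coeff (hermite \<kappa> d) k * (- x) ^ k = (-1) ^ d * (coeff (hermite \<kappa> d) k * x ^ k)" if "k \<le> d" for k
  proof (cases "even (d - k)")
    case True
    have "(-1::real) ^ d = (-1) ^ k * (-1) ^ (d - k)"
      using that by (simp add: power_add[symmetric])
    then show ?thesis using True by (simp add: power_minus[of x])
  qed (simp add: coeff_hermite)
  then have "(\<Sum>k\<le>d. coeff (hermite \<kappa> d) k * (- x) ^ k) = (\<Sum>k\<le>d. (-1) ^ d * (coeff (hermite \<kappa> d) k * x ^ k))"
    by (intro sum.cong) auto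
  then show ?thesis
    by (simp add: poly_eq_sum_coeffs_upto[of _ d] sum_distrib_left)
qed

lemma eventually_poly_hermite_pos: "\<forall>\<^sub>F x in at_top. poly (hermite \<kappa> d) x > 0"
proof -
  obtain M where "\<And>x. x \<ge> M \<Longrightarrow> poly (hermite \<kappa> d) x \<ge> 1"
    using poly_pinfty_gt_lc[of "hermite \<kappa> d"] by auto
  then show ?thesis
    unfolding eventually_at_top_linorder by (meson less_le_trans zero_less_one)
qed

lemma eventually_poly_hermite_sign_at_bot: "\<forall>\<^sub>F x in at_bot. (-1) ^ d * poly (hermite \<kappa> d) x > 0"
proof -
  have "(-1) ^ d * poly (hermite \<kappa> d) (- x) = poly (hermite \<kappa> d) x" for x :: real
    by (simp add: poly_hermite_minus flip: power_add mult.assoc)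
  then show ?thesis
    using eventually_poly_hermite_pos[of \<kappa> d] unfolding at_bot_mirror eventually_filtermap by simp
qed

lemma of_real_gauss_coeff_neg:
  "complex_of_real (gauss_coeff (-1) l) = \<i> ^ l * complex_of_real (gauss_coeff 1 l)"
proof (cases "even l")
  case True
  then obtain r where "l = 2 * r" by blast
  then show ?thesis by (simp add: gauss_coeff_def power_mult)
qed simp

lemma poly_hermite_rotate:
  "poly (cpoly (hermite (-1) d)) (\<i> * u) = \<i> ^ d * poly (cpoly (hermite 1 d)) u"
proof -
  have "complex_of_real (coeff (hermite (-1) d) k) * (\<i> * u) ^ k
      = \<i> ^ d * (complex_of_real (coeff (hermite 1 d) k) * u ^ k)" if "k \<le> d" for k
  proof -
    have "\<i> ^ (d - k) * \<i> ^ k = \<i> ^ d" using that by (simp add: power_add[symmetric])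
    then show ?thesis
      by (simp add: coeff_hermite of_real_gauss_coeff_neg power_mult_distrib field_simps)
  qed
  then show ?thesis
    by (simp add: poly_eq_sum_coeffs_upto[of _ d] sum_distrib_left)
qed

lemma hermite_Suc_sign_at_root:
  fixes S :: "real set"
  assumes "finite S" "card S = d" "\<And>x. x \<in> S \<Longrightarrow> poly (hermite (-1) d) x = 0" "s \<in> S"
  shows "(-1) ^ card {x\<in>S. s < x} * poly (hermite (-1) (Suc d)) s < 0"
proof -
  have prod: "hermite (-1) d = (\<Prod>x\<in>S. [:-x, 1:])"
    by (rule monic_eq_prod_roots) (use assms in auto)
  have "poly (hermite (-1) (Suc d)) s = s * poly (hermite (-1) d) s - 2 * poly (pderiv (hermite (-1) d)) s"
    by (simp add: hermite_rec)
  also have "\<dots> = - 2 * (\<Prod>x\<in>S-{s}. s - x)"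
    using assms(3,4) poly_pderiv_prod_at_root[OF assms(1,4)] by (simp add: prod)
  finally have "(-1) ^ card {x\<in>S. s < x} * poly (hermite (-1) (Suc d)) s
      = - 2 * ((-1) ^ card {x\<in>S. s < x} * (\<Prod>x\<in>S-{s}. s - x))" by simp
  then show ?thesis using sign_prod_diff[OF assms(1), of s] by simp
qed

lemma card_real_roots_hermite: "card {x::real. poly (hermite (-1) d) x = 0} = d"
proof (induction d)
  case 0
  have "poly (hermite (-1) 0) x = 1" for x :: real by (simp add: hermite_def gauss_coeff_def)
  then show ?case by simp
next
  case (Suc d)
  define S where "S = {x::real. poly (hermite (-1) d) x = 0}"
  define xs where "xs = sorted_list_of_set S"
  have S: "finite S" "card S = d" unfolding S_def using Suc.IH by (auto intro: poly_roots_finite)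
  then have xs: "sorted_wrt (<) xs" "length xs = d" "set xs = S" unfolding xs_def by auto
  have "(-1) ^ (d - i) * poly (hermite (-1) (Suc d)) (xs ! i) > 0" if "i < d" for i
  proof -
    have "card {y\<in>S. xs ! i < y} = d - Suc i"
      using card_greater_nth_sorted_list_of_set[OF S(1), of i] that S(2) unfolding xs_def by simp
    moreover have "xs ! i \<in> S" using xs that by (metis nth_mem)
    moreover have "(-1::real) ^ (d - i) = - ((-1) ^ (d - Suc i))"
      using that by (simp add: Suc_diff_Suc[symmetric])
    ultimately show ?thesis using hermite_Suc_sign_at_root[OF S, of "xs ! i"] unfolding S_def by simp
  qed
  then have "Suc (length xs) \<le> card {t. poly (hermite (-1) (Suc d)) t = 0}"
    by (intro card_roots_ge_of_sign_interlacing hermite_neq_0 xs(1) eventually_poly_hermite_pos)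
      (use xs(2) eventually_poly_hermite_sign_at_bot[of "Suc d" "-1"] in simp_all)
  moreover have "card {t. poly (hermite (-1) (Suc d)) t = 0} \<le> Suc d"
    using card_poly_roots_bound[OF hermite_neq_0] by simp
  ultimately show ?case using xs(2) by simp
qed

lemma croots_hermite_neg: "croots (hermite (-1) d) = complex_of_real ` {x. poly (hermite (-1) d) x = 0}"
  by (rule croots_eq_image_real_roots) (simp_all add: card_real_roots_hermite)

lemma card_croots_hermite_neg: "card (croots (hermite (-1) d)) = d"
  unfolding croots_hermite_neg by (subst card_image) (auto intro: inj_onI simp: card_real_roots_hermite)

lemma croots_hermite_neg_subset_Reals: "croots (hermite (-1) d) \<subseteq> \<real>"
  unfolding croots_hermite_neg by auto

lemma croots_hermite_pos: "croots (hermite 1 d) = (\<lambda>z. - \<i> * z) ` croots (hermite (-1) d)"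
proof -
  have iff: "u \<in> croots (hermite 1 d) \<longleftrightarrow> \<i> * u \<in> croots (hermite (-1) d)" for u
    by (simp add: poly_hermite_rotate)
  show ?thesis
  proof (intro set_eqI iffI)
    fix u assume "u \<in> croots (hermite 1 d)"
    then have "\<i> * u \<in> croots (hermite (-1) d)" using iff by blast
    moreover have "u = - \<i> * (\<i> * u)" by simp
    ultimately show "u \<in> (\<lambda>z. - \<i> * z) ` croots (hermite (-1) d)" by (rule rev_image_eqI)
  next
    fix u assume "u \<in> (\<lambda>z. - \<i> * z) ` croots (hermite (-1) d)"
    then obtain z where "z \<in> croots (hermite (-1) d)" "u = - \<i> * z" by blast
    then show "u \<in> croots (hermite 1 d)" using iff[of u] by simp
  qed
qed

lemma card_croots_hermite_pos: "card (croots (hermite 1 d)) = d"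
  unfolding croots_hermite_pos using card_croots_hermite_neg[of d]
  by (subst card_image) (auto intro: inj_onI)

lemma croots_hermite_pos_Int_Reals: "croots (hermite 1 d) \<inter> \<real> = (if odd d then {0} else {})"
proof -
  have "u = 0" if "u \<in> croots (hermite 1 d)" "u \<in> \<real>" for u
  proof -
    have "\<i> * u \<in> \<real>"
      using that croots_hermite_neg_subset_Reals[of d] by (auto simp: poly_hermite_rotate)
    then show ?thesis using that(2) by (auto simp: complex_is_Real_iff complex_eq_iff)
  qed
  moreover have "0 \<in> croots (hermite 1 d) \<longleftrightarrow> odd d"
    by (simp add: poly_0_coeff_0 coeff_hermite gauss_coeff_def)
  ultimately show ?thesis by auto
qed

section \<open>Finite differences and Taylor remainders\<close>

text \<open>\<open>ndiff l f k\<close> is \<open>(-1)\<^sup>l\<close> times the \<open>l\<close>-th forward difference of \<open>f\<close> at \<open>k\<close>.\<close>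

definition ndiff :: "nat \<Rightarrow> (nat \<Rightarrow> real) \<Rightarrow> nat \<Rightarrow> real" where
  "ndiff l f k = (\<Sum>i\<le>l. (-1) ^ i * real (l choose i) * f (k + i))"

lemma ndiff_Suc: "ndiff (Suc l) f k = ndiff l f k - ndiff l f (Suc k)"
proof -
  let ?S = "\<lambda>c. (\<Sum>i\<le>l. (-1) ^ Suc i * real (c choose Suc i) * f (k + Suc i))"
  have "ndiff (Suc l) f k = f k + ?S (Suc l)"
    unfolding ndiff_def by (subst sum.atMost_Suc_shift) simp
  also have "?S (Suc l) = (\<Sum>i\<le>l. (-1) ^ Suc i * real (l choose i) * f (k + Suc i)) + ?S l"
    by (simp add: sum.distrib[symmetric] algebra_simps)
  finally have "ndiff (Suc l) f k = f k + (\<Sum>i\<le>l. (-1) ^ Suc i * real (l choose i) * f (k + Suc i)) + ?S l"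
    by simp
  moreover have "(\<Sum>i\<le>l. (-1) ^ Suc i * real (l choose i) * f (k + Suc i)) = - ndiff l f (Suc k)"
    by (simp add: ndiff_def sum_negf[symmetric])
  moreover have "ndiff l f k = f k + ?S l"
  proof -
    have "ndiff l f k = (\<Sum>i\<le>Suc l. (-1) ^ i * real (l choose i) * f (k + i))"
      by (simp add: ndiff_def)
    also have "\<dots> = f k + ?S l"
      by (subst sum.atMost_Suc_shift) simp
    finally show ?thesis .
  qed
  ultimately show ?thesis by simp
qed

lemma ndiff_add: "ndiff l (\<lambda>j. f j + g j) k = ndiff l f k + ndiff l g k"
  unfolding ndiff_def by (simp add: sum.distrib algebra_simps)

lemma ndiff_diff: "ndiff l (\<lambda>j. f j - g j) k = ndiff l f k - ndiff l g k"
  unfolding ndiff_def by (simp add: sum_subtractf algebra_simps)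

lemma ndiff_sum: "ndiff l (\<lambda>j. \<Sum>t\<in>T. c t * g t j) k = (\<Sum>t\<in>T. c t * ndiff l (g t) k)"
  unfolding ndiff_def by (simp add: sum_distrib_left sum.swap[of _ T] ac_simps)

lemma ndiff_power:
  "e \<le> l \<Longrightarrow> ndiff l (\<lambda>j. real j ^ e) k = (if e = l then (-1) ^ l * fact l else 0)"
proof (induction l arbitrary: e k)
  case 0
  then show ?case by (simp add: ndiff_def)
next
  case (Suc l)
  have step: "real (Suc j) ^ e - real j ^ e = (\<Sum>t<e. real (e choose t) * real j ^ t)" for j
    using binomial_ring[of "real j" 1 e] by (simp add: lessThan_Suc_atMost[symmetric] add.commute)
  have "ndiff (Suc l) (\<lambda>j. real j ^ e) k = - ndiff l (\<lambda>j. real (Suc j) ^ e - real j ^ e) k"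
    by (simp add: ndiff_Suc ndiff_diff) (simp add: ndiff_def)
  also have "\<dots> = - (\<Sum>t<e. real (e choose t) * ndiff l (\<lambda>j. real j ^ t) k)"
    by (simp only: step ndiff_sum)
  also have "\<dots> = (if e = Suc l then (-1) ^ Suc l * fact (Suc l) else 0)"
  proof (cases "e = Suc l")
    case True
    have "(\<Sum>t<e. real (e choose t) * ndiff l (\<lambda>j. real j ^ t) k)
        = (\<Sum>t\<in>{l}. real (e choose t) * ndiff l (\<lambda>j. real j ^ t) k)"
      by (rule sum.mono_neutral_cong_right) (use True Suc.IH in auto)
    then show ?thesis using True Suc.IH[of l] by (simp add: algebra_simps)
  next
    case False
    then have "(\<Sum>t<e. real (e choose t) * ndiff l (\<lambda>j. real j ^ t) k) = 0"
      using Suc.prems Suc.IH by (intro sum.neutral) auto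
    then show ?thesis using False by simp
  qed
  finally show ?case .
qed

lemma tendsto_coeff_pcompose:
  fixes q :: "nat \<Rightarrow> real poly"
  assumes "\<And>i. (\<lambda>n. coeff (q n) i) \<longlonglongrightarrow> coeff q0 i"
  shows "(\<lambda>n. coeff (pcompose p (q n)) e) \<longlonglongrightarrow> coeff (pcompose p q0) e"
proof (induction p arbitrary: e rule: pCons_induct)
  case 0
  then show ?case by simp
next
  case (pCons a p)
  have "coeff (pcompose (pCons a p) r) e
      = coeff [:a:] e + (\<Sum>i\<le>e. coeff r i * coeff (pcompose p r) (e - i))" for r
    by (simp add: pcompose_pCons coeff_mult)
  then show ?case by (simp only:) (intro tendsto_intros assms pCons.IH)
qed

definition exp_taylor :: "nat \<Rightarrow> real poly" where
  "exp_taylor d = (\<Sum>t\<le>d. monom (1 / fact t) t)"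

lemma poly_exp_taylor: "poly (exp_taylor d) y = (\<Sum>t\<le>d. y ^ t / fact t)"
  unfolding exp_taylor_def by (simp add: poly_sum poly_monom)

lemma degree_exp_taylor: "degree (exp_taylor d) \<le> d"
  unfolding exp_taylor_def by (rule degree_sum_le) (auto intro: order_trans[OF degree_monom_le])

lemma coeff_exp_taylor_pcompose_monom2:
  assumes "l \<le> d"
  shows "coeff (pcompose (exp_taylor d) (monom \<kappa> 2)) l = gauss_coeff \<kappa> l"
proof -
  let ?G = "(\<Sum>t\<le>d. monom (\<kappa> ^ t / fact t) (2 * t)) :: real poly"
  have "poly (pcompose (exp_taylor d) (monom \<kappa> 2)) x = poly ?G x" for x
    by (simp add: poly_pcompose poly_exp_taylor poly_sum poly_monom power_mult power_mult_distrib)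
  then have "pcompose (exp_taylor d) (monom \<kappa> 2) = ?G" by (simp add: poly_eq_poly_eq_iff[symmetric] fun_eq_iff)
  moreover have "coeff ?G l = (\<Sum>t\<in>{t\<in>{..d}. 2 * t = l}. \<kappa> ^ t / fact t)"
    unfolding coeff_sum coeff_monom by (subst sum.inter_filter) simp_all
  moreover have "{t\<in>{..d}. 2 * t = l} = (if even l then {l div 2} else {})"
    using assms by auto
  ultimately show ?thesis by (simp add: gauss_coeff_def)
qed

lemma abs_exp_minus_taylor_le:
  fixes y :: real
  shows "\<bar>exp y - (\<Sum>t\<le>d. y ^ t / fact t)\<bar> \<le> exp \<bar>y\<bar> * \<bar>y\<bar> ^ Suc d"
proof -
  obtain t where t: "\<bar>t\<bar> \<le> \<bar>y\<bar>" "exp y = (\<Sum>m<Suc d. y ^ m / fact m) + exp t / fact (Suc d) * y ^ Suc d"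
    using Maclaurin_exp_le[of y "Suc d"] by blast
  have "1 \<le> (fact (Suc d) :: real)" by (rule fact_ge_1)
  then have "exp t / fact (Suc d) \<le> exp t" by (simp add: divide_le_eq mult_le_cancel_left1 del: fact_Suc)
  also have "exp t \<le> exp \<bar>y\<bar>" using t(1) by simp
  finally have "exp t / fact (Suc d) * \<bar>y\<bar> ^ Suc d \<le> exp \<bar>y\<bar> * \<bar>y\<bar> ^ Suc d"
    by (rule mult_right_mono) simp
  then have "\<bar>exp t / fact (Suc d) * y ^ Suc d\<bar> \<le> exp \<bar>y\<bar> * \<bar>y\<bar> ^ Suc d"
    by (simp add: abs_mult power_abs del: fact_Suc power_Suc)
  then show ?thesis using t(2) by (simp add: lessThan_Suc_atMost)
qed

lemma exp_minus_taylor_div_power_tendsto_0: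
  fixes \<psi> \<delta> :: "nat \<Rightarrow> real"
  assumes \<delta>_pos: "\<And>n. \<delta> n > 0" and "\<delta> \<longlonglongrightarrow> 0" and \<psi>: "(\<lambda>n. \<psi> n / \<delta> n) \<longlonglongrightarrow> 0"
  shows "(\<lambda>n. (exp (\<psi> n) - (\<Sum>t\<le>d. \<psi> n ^ t / fact t)) / \<delta> n ^ d) \<longlonglongrightarrow> 0"
proof (rule Lim_null_comparison[OF always_eventually])
  have "\<psi> \<longlonglongrightarrow> 0"
    using tendsto_mult[OF \<psi> \<open>\<delta> \<longlonglongrightarrow> 0\<close>] \<delta>_pos by (simp add: less_imp_neq[symmetric])
  then have "(\<lambda>n. exp \<bar>\<psi> n\<bar> * \<bar>\<psi> n / \<delta> n\<bar> ^ Suc d * \<delta> n) \<longlonglongrightarrow> exp \<bar>0\<bar> * \<bar>0\<bar> ^ Suc d * 0"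
    by (intro tendsto_intros \<psi> \<open>\<delta> \<longlonglongrightarrow> 0\<close>)
  then show "(\<lambda>n. exp \<bar>\<psi> n\<bar> * \<bar>\<psi> n / \<delta> n\<bar> ^ Suc d * \<delta> n) \<longlonglongrightarrow> 0" by simp
  show "\<forall>n. norm ((exp (\<psi> n) - (\<Sum>t\<le>d. \<psi> n ^ t / fact t)) / \<delta> n ^ d)
      \<le> exp \<bar>\<psi> n\<bar> * \<bar>\<psi> n / \<delta> n\<bar> ^ Suc d * \<delta> n"
  proof
    fix n
    have "norm ((exp (\<psi> n) - (\<Sum>t\<le>d. \<psi> n ^ t / fact t)) / \<delta> n ^ d)
        \<le> exp \<bar>\<psi> n\<bar> * \<bar>\<psi> n\<bar> ^ Suc d / \<delta> n ^ d"
      using divide_right_mono[OF abs_exp_minus_taylor_le[of "\<psi> n" d], of "\<delta> n ^ d"] \<delta>_pos[of n]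
      by (simp add: abs_divide)
    also have "\<dots> = exp \<bar>\<psi> n\<bar> * \<bar>\<psi> n / \<delta> n\<bar> ^ Suc d * \<delta> n"
      using \<delta>_pos[of n] by (simp add: power_divide abs_divide field_simps)
    finally show "norm ((exp (\<psi> n) - (\<Sum>t\<le>d. \<psi> n ^ t / fact t)) / \<delta> n ^ d)
        \<le> exp \<bar>\<psi> n\<bar> * \<bar>\<psi> n / \<delta> n\<bar> ^ Suc d * \<delta> n" .
  qed
qed

lemma exp_minus_taylor_scaled_tendsto_0:
  fixes \<psi> \<epsilon> \<delta> :: "nat \<Rightarrow> real"
  assumes \<delta>_pos: "\<And>n. \<delta> n > 0" and "\<delta> \<longlonglongrightarrow> 0"
    and \<psi>: "(\<lambda>n. \<psi> n / \<delta> n) \<longlonglongrightarrow> 0" and \<epsilon>: "(\<lambda>n. \<epsilon> n / \<delta> n ^ d) \<longlonglongrightarrow> 0"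
  shows "(\<lambda>n. (exp (\<psi> n + \<epsilon> n) - (\<Sum>t\<le>d. \<psi> n ^ t / fact t)) / \<delta> n ^ d) \<longlonglongrightarrow> 0"
proof -
  have "\<psi> \<longlonglongrightarrow> 0"
    using tendsto_mult[OF \<psi> \<open>\<delta> \<longlonglongrightarrow> 0\<close>] \<delta>_pos by (simp add: less_imp_neq[symmetric])
  moreover have "\<epsilon> \<longlonglongrightarrow> 0"
    using tendsto_mult[OF \<epsilon> tendsto_power[OF \<open>\<delta> \<longlonglongrightarrow> 0\<close>, of d]] \<delta>_pos
    by (simp add: less_imp_neq[symmetric])
  ultimately have bound_lim: "(\<lambda>n. exp (\<psi> n) * exp \<bar>\<epsilon> n\<bar> * \<bar>\<epsilon> n / \<delta> n ^ d\<bar>)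
      \<longlonglongrightarrow> exp 0 * exp \<bar>0\<bar> * \<bar>0\<bar>"
    by (intro tendsto_intros \<epsilon>)
  have perturb: "(\<lambda>n. exp (\<psi> n) * (exp (\<epsilon> n) - 1) / \<delta> n ^ d) \<longlonglongrightarrow> 0"
  proof (rule Lim_null_comparison[OF always_eventually])
    show "\<forall>n. norm (exp (\<psi> n) * (exp (\<epsilon> n) - 1) / \<delta> n ^ d)
        \<le> exp (\<psi> n) * exp \<bar>\<epsilon> n\<bar> * \<bar>\<epsilon> n / \<delta> n ^ d\<bar>"
    proof
      fix n
      have "\<bar>exp (\<epsilon> n) - 1\<bar> \<le> exp \<bar>\<epsilon> n\<bar> * \<bar>\<epsilon> n\<bar>"
        using abs_exp_minus_taylor_le[of "\<epsilon> n" 0] by simp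
      then show "norm (exp (\<psi> n) * (exp (\<epsilon> n) - 1) / \<delta> n ^ d)
          \<le> exp (\<psi> n) * exp \<bar>\<epsilon> n\<bar> * \<bar>\<epsilon> n / \<delta> n ^ d\<bar>"
        using \<delta>_pos[of n] by (simp add: abs_mult abs_divide divide_right_mono mult.assoc)
    qed
    show "(\<lambda>n. exp (\<psi> n) * exp \<bar>\<epsilon> n\<bar> * \<bar>\<epsilon> n / \<delta> n ^ d\<bar>) \<longlonglongrightarrow> 0"
      using bound_lim by simp
  qed
  have "exp (\<psi> n) * (exp (\<epsilon> n) - 1) / \<delta> n ^ d + (exp (\<psi> n) - (\<Sum>t\<le>d. \<psi> n ^ t / fact t)) / \<delta> n ^ d
      = (exp (\<psi> n + \<epsilon> n) - (\<Sum>t\<le>d. \<psi> n ^ t / fact t)) / \<delta> n ^ d" for n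
    by (simp add: exp_add add_divide_distrib[symmetric] algebra_simps)
  then show ?thesis
    using tendsto_add[OF perturb exp_minus_taylor_div_power_tendsto_0[where d = d, OF \<delta>_pos \<open>\<delta> \<longlonglongrightarrow> 0\<close> \<psi>]]
    by simp
qed

lemma ndiff_poly_scaled_tendsto:
  fixes T :: "nat \<Rightarrow> real poly" and \<delta> :: "nat \<Rightarrow> real"
  assumes \<delta>_nz: "\<And>n. \<delta> n \<noteq> 0" and "\<delta> \<longlonglongrightarrow> 0"
    and deg: "\<And>n. degree (T n) \<le> N" and "l \<le> N"
    and lim: "\<And>e. (\<lambda>n. coeff (T n) e) \<longlonglongrightarrow> coeff T0 e"
  shows "(\<lambda>n. ndiff l (\<lambda>j. poly (T n) (\<delta> n * real j)) k / \<delta> n ^ l)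
      \<longlonglongrightarrow> (-1) ^ l * fact l * coeff T0 l"
proof -
  let ?c = "\<lambda>e. ndiff l (\<lambda>j. real j ^ e) k"
  let ?s = "\<lambda>x e. if e < l then 0 else x ^ (e - l)"
  have expand: "ndiff l (\<lambda>j. poly (T n) (\<delta> n * real j)) k / \<delta> n ^ l
      = (\<Sum>e\<le>N. coeff (T n) e * ?s (\<delta> n) e * ?c e)" for n
  proof -
    have "(\<lambda>j. poly (T n) (\<delta> n * real j)) = (\<lambda>j. \<Sum>e\<le>N. (coeff (T n) e * \<delta> n ^ e) * real j ^ e)"
      by (simp add: poly_eq_sum_coeffs_upto[OF deg] power_mult_distrib mult.assoc)
    then have "ndiff l (\<lambda>j. poly (T n) (\<delta> n * real j)) k = (\<Sum>e\<le>N. (coeff (T n) e * \<delta> n ^ e) * ?c e)"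
      by (simp only: ndiff_sum)
    moreover have "coeff (T n) e * \<delta> n ^ e * ?c e / \<delta> n ^ l = coeff (T n) e * ?s (\<delta> n) e * ?c e" for e
    proof (cases "e < l")
      case False
      then have "\<delta> n ^ e = \<delta> n ^ (e - l) * \<delta> n ^ l" by (simp add: power_add[symmetric])
      then show ?thesis using False \<delta>_nz[of n] by simp
    qed (simp add: ndiff_power)
    ultimately show ?thesis by (simp add: sum_divide_distrib)
  qed
  have "(\<lambda>n. \<Sum>e\<le>N. coeff (T n) e * ?s (\<delta> n) e * ?c e) \<longlonglongrightarrow> (\<Sum>e\<le>N. coeff T0 e * ?s 0 e * ?c e)"
  proof (intro tendsto_sum tendsto_mult tendsto_const lim)
    fix e
    show "(\<lambda>n. ?s (\<delta> n) e) \<longlonglongrightarrow> ?s 0 e"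
      by (cases "e < l") (simp_all add: tendsto_power[OF \<open>\<delta> \<longlonglongrightarrow> 0\<close>])
  qed
  moreover have "(\<Sum>e\<le>N. coeff T0 e * ?s 0 e * ?c e) = coeff T0 l * ?c l"
    by (rule sum.mono_neutral_cong_right[of _ "{l}", simplified]) (use \<open>l \<le> N\<close> in auto)
  ultimately show ?thesis unfolding expand by (simp add: ndiff_power mult.commute)
qed

lemma ndiff_scaled_tendsto_0:
  fixes R :: "nat \<Rightarrow> nat \<Rightarrow> real" and \<delta> :: "nat \<Rightarrow> real"
  assumes \<delta>_nz: "\<And>n. \<delta> n \<noteq> 0" and "\<delta> \<longlonglongrightarrow> 0" and "l \<le> d"
    and small: "\<And>i. i \<le> l \<Longrightarrow> (\<lambda>n. R n (k + i) / \<delta> n ^ d) \<longlonglongrightarrow> 0"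
  shows "(\<lambda>n. ndiff l (R n) k / \<delta> n ^ l) \<longlonglongrightarrow> 0"
proof -
  have "ndiff l (R n) k / \<delta> n ^ l
      = (\<Sum>i\<le>l. (-1) ^ i * real (l choose i) * (R n (k + i) / \<delta> n ^ d)) * \<delta> n ^ (d - l)" for n
  proof -
    have "\<delta> n ^ d = \<delta> n ^ l * \<delta> n ^ (d - l)" using \<open>l \<le> d\<close> by (simp add: power_add[symmetric])
    then show ?thesis using \<delta>_nz[of n] by (simp add: ndiff_def sum_divide_distrib sum_distrib_right)
  qed
  moreover have "(\<lambda>n. (\<Sum>i\<le>l. (-1) ^ i * real (l choose i) * (R n (k + i) / \<delta> n ^ d)) * \<delta> n ^ (d - l))
      \<longlonglongrightarrow> (\<Sum>i\<le>l. (-1) ^ i * real (l choose i) * 0) * 0 ^ (d - l)"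
    by (intro tendsto_intros small \<open>\<delta> \<longlonglongrightarrow> 0\<close>) simp
  ultimately show ?thesis by simp
qed

lemma coeff_jensen_J:
  "coeff (jensen_J \<alpha> d n) k = (if k \<le> d then real (d choose k) * \<alpha> (n + k) else 0)"
  unfolding jensen_J_def by (auto simp: coeff_sum)

lemma degree_jensen_J: "\<alpha> (n + d) \<noteq> 0 \<Longrightarrow> degree (jensen_J \<alpha> d n) = d"
  by (intro antisym degree_le le_degree) (auto simp: coeff_jensen_J)

lemma poly_cpoly_jensen_J:
  "poly (cpoly (jensen_J \<alpha> d n)) z = (\<Sum>j\<le>d. complex_of_real (real (d choose j) * \<alpha> (n + j)) * z ^ j)"
  unfolding jensen_J_def
  by (simp add: cpoly_sum poly_sum poly_monom map_poly_monom del: of_real_mult)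

lemma jensen_K_eq_reflect_poly:
  assumes "\<alpha> (n + d) \<noteq> 0"
  shows "jensen_K \<alpha> d n = reflect_poly (jensen_J \<alpha> d n)"
proof (rule poly_eqI)
  fix k
  have "coeff (jensen_K \<alpha> d n) k = (\<Sum>j\<in>{j\<in>{..d}. d - j = k}. real (d choose j) * \<alpha> (n + j))"
    unfolding jensen_K_def coeff_sum coeff_monom by (subst sum.inter_filter) simp_all
  also have "{j\<in>{..d}. d - j = k} = (if k \<le> d then {d - k} else {})" by auto
  finally show "coeff (jensen_K \<alpha> d n) k = coeff (reflect_poly (jensen_J \<alpha> d n)) k"
    using assms by (simp add: coeff_reflect_poly degree_jensen_J coeff_jensen_J)
qed

lemma binomial_shift_sum:
  fixes a :: "nat \<Rightarrow> 'a::comm_ring_1" and w :: 'a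
  shows "(\<Sum>j\<le>d. of_nat (d choose j) * a j * (w - 1) ^ j) =
         (\<Sum>k\<le>d. of_nat (d choose k) * (\<Sum>i\<le>d-k. (-1) ^ i * of_nat ((d-k) choose i) * a (k+i)) * w ^ k)"
proof -
  define g where "g k i = of_nat (d choose k) * of_nat ((d-k) choose i) * (-1) ^ i * a (k+i) * w ^ k" for k i
  have "(\<Sum>j\<le>d. of_nat (d choose j) * a j * (w - 1) ^ j) =
        (\<Sum>j\<le>d. \<Sum>k\<le>j. g k (j - k))"
  proof (rule sum.cong[OF refl])
    fix j assume j: "j \<in> {..d}"
    have "(w - 1) ^ j = (\<Sum>k\<le>j. of_nat (j choose k) * w ^ k * (-1) ^ (j - k))"
      using binomial_ring[of w "-1" j] by simp
    then have "of_nat (d choose j) * a j * (w - 1) ^ j =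
               (\<Sum>k\<le>j. of_nat (d choose j) * of_nat (j choose k) * (-1) ^ (j - k) * a j * w ^ k)"
      by (simp add: sum_distrib_left ac_simps)
    also have "\<dots> = (\<Sum>k\<le>j. g k (j - k))"
    proof (rule sum.cong[OF refl])
      fix k assume k: "k \<in> {..j}"
      have "(d choose j) * (j choose k) = (d choose k) * ((d - k) choose (j - k))"
        using choose_mult[of k j d] j k by simp
      then have "of_nat (d choose j) * of_nat (j choose k) = (of_nat (d choose k) * of_nat ((d - k) choose (j - k)) :: 'a)"
        by (metis of_nat_mult)
      moreover have "k + (j - k) = j" using k by simp
      ultimately show "of_nat (d choose j) * of_nat (j choose k) * (-1) ^ (j - k) * a j * w ^ k = g k (j - k)"
        unfolding g_def by simp
    qed
    finally show "of_nat (d choose j) * a j * (w - 1) ^ j = (\<Sum>k\<le>j. g k (j - k))" .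
  qed
  also have "\<dots> = (\<Sum>(k,i)\<in>{(k,i). k + i \<le> d}. g k i)"
    by (rule sum.triangle_reindex_eq[symmetric])
  also have "{(k,i). k + i \<le> d} = Sigma {..d} (\<lambda>k. {..d-k})" by auto
  also have "(\<Sum>(k,i)\<in>Sigma {..d} (\<lambda>k. {..d-k}). g k i) = (\<Sum>k\<le>d. \<Sum>i\<le>d-k. g k i)"
    by (rule sum.Sigma[symmetric]) auto
  also have "\<dots> = (\<Sum>k\<le>d. of_nat (d choose k) * (\<Sum>i\<le>d-k. (-1) ^ i * of_nat ((d-k) choose i) * a (k+i)) * w ^ k)"
    unfolding g_def by (simp add: sum_distrib_left sum_distrib_right ac_simps)
  finally show ?thesis .
qed

section \<open>Log-polynomial sequences\<close>

locale log_poly_expansion =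
  fixes \<alpha> A \<delta> :: "nat \<Rightarrow> real" and \<kappa> :: real and m :: nat and g \<epsilon> :: "nat \<Rightarrow> nat \<Rightarrow> real"
  assumes m_ge_2: "m \<ge> 2"
    and \<alpha>_pos: "\<And>n. \<alpha> n > 0"
    and \<delta>_pos: "\<And>n. \<delta> n > 0" and \<delta>_tendsto: "\<delta> \<longlonglongrightarrow> 0"
    and g_small: "\<And>k. k \<in> {3..m} \<Longrightarrow> (\<lambda>n. g k n / \<delta> n ^ k) \<longlonglongrightarrow> 0"
    and \<epsilon>_small: "\<And>j. j \<le> m + 1 \<Longrightarrow> (\<lambda>n. \<epsilon> n j / \<delta> n ^ (m + 1)) \<longlonglongrightarrow> 0"
    and ln_ratio: "\<And>n j. ln (\<alpha> (n + j) / \<alpha> n)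
      = A n * real j + \<kappa> * \<delta> n ^ 2 * real j ^ 2 + (\<Sum>k=3..m. g k n * real j ^ k) + \<epsilon> n j"
begin

lemma \<delta>_nz: "\<delta> n \<noteq> 0"
  using \<delta>_pos[of n] by simp

lemma log_concavity_ratio_tendsto:
  "(\<lambda>n. (2 * ln (\<alpha> (n + 1) / \<alpha> n) - ln (\<alpha> (n + 2) / \<alpha> n)) / \<delta> n ^ 2) \<longlonglongrightarrow> - 2 * \<kappa>"
proof -
  let ?r = "\<lambda>n. (2 * ln (\<alpha> (n + 1) / \<alpha> n) - ln (\<alpha> (n + 2) / \<alpha> n)) / \<delta> n ^ 2"
  have "?r n = - 2 * \<kappa> + (\<Sum>k=3..m. (g k n / \<delta> n ^ k) * \<delta> n ^ (k - 2) * (2 - 2 ^ k))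
      + (2 * (\<epsilon> n 1 / \<delta> n ^ (m + 1)) - \<epsilon> n 2 / \<delta> n ^ (m + 1)) * \<delta> n ^ (m - 1)" for n
  proof -
    have pow: "\<delta> n ^ k = \<delta> n ^ (k - 2) * \<delta> n ^ 2" if "k \<ge> 2" for k
      using that by (metis le_add_diff_inverse2 power_add)
    have "(g k n / \<delta> n ^ k) * \<delta> n ^ (k - 2) * (2 - 2 ^ k) = (2 * g k n - g k n * 2 ^ k) / \<delta> n ^ 2"
      if "k \<in> {3..m}" for k
      using pow[of k] that \<delta>_nz[of n] by (simp add: field_simps)
    then have "(\<Sum>k=3..m. (g k n / \<delta> n ^ k) * \<delta> n ^ (k - 2) * (2 - 2 ^ k))
        = (\<Sum>k=3..m. (2 * g k n - g k n * 2 ^ k) / \<delta> n ^ 2)"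
      by (rule sum.cong[OF refl])
    also have "\<dots> = (2 * (\<Sum>k=3..m. g k n) - (\<Sum>k=3..m. g k n * 2 ^ k)) / \<delta> n ^ 2"
      by (simp add: sum_divide_distrib[symmetric] sum_subtractf sum_distrib_left)
    finally have g_terms: "(\<Sum>k=3..m. (g k n / \<delta> n ^ k) * \<delta> n ^ (k - 2) * (2 - 2 ^ k))
        = (2 * (\<Sum>k=3..m. g k n) - (\<Sum>k=3..m. g k n * 2 ^ k)) / \<delta> n ^ 2" .
    have \<epsilon>_terms: "(2 * (\<epsilon> n 1 / \<delta> n ^ (m + 1)) - \<epsilon> n 2 / \<delta> n ^ (m + 1)) * \<delta> n ^ (m - 1)
        = (2 * \<epsilon> n 1 - \<epsilon> n 2) / \<delta> n ^ 2"
      using pow[of "m + 1"] m_ge_2 \<delta>_nz[of n] by (simp add: field_simps)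
    show ?thesis
      unfolding g_terms \<epsilon>_terms ln_ratio[of n 1] ln_ratio[of n 2] using \<delta>_nz[of n]
      by (simp add: field_simps)
  qed
  moreover have "(\<lambda>n. - 2 * \<kappa> + (\<Sum>k=3..m. (g k n / \<delta> n ^ k) * \<delta> n ^ (k - 2) * (2 - 2 ^ k))
      + (2 * (\<epsilon> n 1 / \<delta> n ^ (m + 1)) - \<epsilon> n 2 / \<delta> n ^ (m + 1)) * \<delta> n ^ (m - 1))
      \<longlonglongrightarrow> - 2 * \<kappa> + (\<Sum>k=3..m. 0 * 0 ^ (k - 2) * (2 - 2 ^ k)) + (2 * 0 - 0) * 0 ^ (m - 1)"
    by (intro tendsto_intros g_small \<epsilon>_small \<delta>_tendsto) (use m_ge_2 in auto)
  ultimately show ?thesis using m_ge_2 by simp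
qed

lemma ln_ratio_sign_iff:
  "\<alpha> (n + 1) ^ 2 > \<alpha> n * \<alpha> (n + 2) \<longleftrightarrow> 2 * ln (\<alpha> (n + 1) / \<alpha> n) - ln (\<alpha> (n + 2) / \<alpha> n) > 0"
  "\<alpha> (n + 1) ^ 2 < \<alpha> n * \<alpha> (n + 2) \<longleftrightarrow> 2 * ln (\<alpha> (n + 1) / \<alpha> n) - ln (\<alpha> (n + 2) / \<alpha> n) < 0"
proof -
  have pos: "\<alpha> n > 0" "\<alpha> (n + 1) > 0" "\<alpha> (n + 2) > 0" using \<alpha>_pos by auto
  then have "2 * ln (\<alpha> (n + 1) / \<alpha> n) - ln (\<alpha> (n + 2) / \<alpha> n) = ln (\<alpha> (n + 1) ^ 2) - ln (\<alpha> n * \<alpha> (n + 2))"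
    by (simp add: ln_div ln_mult ln_realpow)
  then show "\<alpha> (n + 1) ^ 2 > \<alpha> n * \<alpha> (n + 2) \<longleftrightarrow> 2 * ln (\<alpha> (n + 1) / \<alpha> n) - ln (\<alpha> (n + 2) / \<alpha> n) > 0"
    "\<alpha> (n + 1) ^ 2 < \<alpha> n * \<alpha> (n + 2) \<longleftrightarrow> 2 * ln (\<alpha> (n + 1) / \<alpha> n) - ln (\<alpha> (n + 2) / \<alpha> n) < 0"
    using pos by simp_all
qed

lemma eventually_strictly_log_concave:
  assumes "\<kappa> < 0"
  shows "\<forall>\<^sub>F n in sequentially. \<alpha> (n + 1) ^ 2 > \<alpha> n * \<alpha> (n + 2)"
proof -
  have "\<forall>\<^sub>F n in sequentially. (2 * ln (\<alpha> (n + 1) / \<alpha> n) - ln (\<alpha> (n + 2) / \<alpha> n)) / \<delta> n ^ 2 > 0"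
    using order_tendstoD(1)[OF log_concavity_ratio_tendsto] assms by simp
  then show ?thesis
  proof eventually_elim
    case (elim n)
    then show ?case
      by (intro ln_ratio_sign_iff(1)[THEN iffD2]) (simp add: zero_less_divide_iff \<delta>_nz)
  qed
qed

lemma eventually_strictly_log_convex:
  assumes "\<kappa> > 0"
  shows "\<forall>\<^sub>F n in sequentially. \<alpha> (n + 1) ^ 2 < \<alpha> n * \<alpha> (n + 2)"
proof -
  have "\<forall>\<^sub>F n in sequentially. (2 * ln (\<alpha> (n + 1) / \<alpha> n) - ln (\<alpha> (n + 2) / \<alpha> n)) / \<delta> n ^ 2 < 0"
    using order_tendstoD(2)[OF log_concavity_ratio_tendsto] assms by simp
  then show ?thesis
  proof eventually_elim
    case (elim n)
    then show ?case
      by (intro ln_ratio_sign_iff(2)[THEN iffD2]) (simp add: divide_less_0_iff \<delta>_nz)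
  qed
qed

definition scaled_ratio :: "nat \<Rightarrow> nat \<Rightarrow> real" where
  "scaled_ratio n j = \<alpha> (n + j) / \<alpha> n * exp (- (A n * real j))"

definition phase_poly :: "nat \<Rightarrow> real poly" where
  "phase_poly n = monom \<kappa> 2 + (\<Sum>k=3..m. monom (g k n / \<delta> n ^ k) k)"

lemma poly_phase_poly:
  "poly (phase_poly n) (\<delta> n * real j) = \<kappa> * \<delta> n ^ 2 * real j ^ 2 + (\<Sum>k=3..m. g k n * real j ^ k)"
  using \<delta>_nz[of n] by (simp add: phase_poly_def poly_sum poly_monom power_mult_distrib)

lemma scaled_ratio_eq_exp: "scaled_ratio n j = exp (poly (phase_poly n) (\<delta> n * real j) + \<epsilon> n j)"
proof -
  have "\<alpha> (n + j) / \<alpha> n = exp (ln (\<alpha> (n + j) / \<alpha> n))" using \<alpha>_pos[of n] \<alpha>_pos[of "n + j"] by simp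
  then show ?thesis unfolding scaled_ratio_def ln_ratio poly_phase_poly by (simp add: exp_add[symmetric])
qed

lemma degree_phase_poly: "degree (phase_poly n) \<le> m"
  unfolding phase_poly_def using m_ge_2
  by (intro degree_add_le degree_sum_le) (auto intro: order_trans[OF degree_monom_le])

lemma coeff_phase_poly_tendsto: "(\<lambda>n. coeff (phase_poly n) i) \<longlonglongrightarrow> coeff (monom \<kappa> 2) i"
proof -
  have "(\<lambda>n. coeff (monom \<kappa> 2) i + (\<Sum>k=3..m. if k = i then g k n / \<delta> n ^ k else 0))
      \<longlonglongrightarrow> coeff (monom \<kappa> 2) i + (\<Sum>k=3..m. 0)"
  proof (intro tendsto_add tendsto_const tendsto_sum)
    fix k assume "k \<in> {3..m}"
    then show "(\<lambda>n. if k = i then g k n / \<delta> n ^ k else 0) \<longlonglongrightarrow> 0"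
      using g_small[of k] by (cases "k = i") auto
  qed
  then show ?thesis by (simp add: phase_poly_def coeff_sum coeff_monom)
qed

lemma phase_div_\<delta>_tendsto: "(\<lambda>n. poly (phase_poly n) (\<delta> n * real j) / \<delta> n) \<longlonglongrightarrow> 0"
proof -
  have "poly (phase_poly n) (\<delta> n * real j) / \<delta> n
      = \<kappa> * \<delta> n * real j ^ 2 + (\<Sum>k=3..m. (g k n / \<delta> n ^ k) * \<delta> n ^ (k - 1) * real j ^ k)" for n
  proof -
    have "g k n * real j ^ k / \<delta> n = (g k n / \<delta> n ^ k) * \<delta> n ^ (k - 1) * real j ^ k" if "k \<in> {3..m}" for k
    proof -
      have "\<delta> n ^ k = \<delta> n ^ (k - 1) * \<delta> n" using that by (simp add: power_eq_if)
      then show ?thesis using \<delta>_nz[of n] by (simp add: field_simps)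
    qed
    then show ?thesis using \<delta>_nz[of n]
      by (simp add: poly_phase_poly add_divide_distrib sum_divide_distrib power2_eq_square)
  qed
  moreover have "(\<lambda>n. \<kappa> * \<delta> n * real j ^ 2 + (\<Sum>k=3..m. (g k n / \<delta> n ^ k) * \<delta> n ^ (k - 1) * real j ^ k))
      \<longlonglongrightarrow> \<kappa> * 0 * real j ^ 2 + (\<Sum>k=3..m. 0 * 0 ^ (k - 1) * real j ^ k)"
    by (intro tendsto_intros \<delta>_tendsto g_small) auto
  ultimately show ?thesis by simp
qed

lemma \<epsilon>_small_power:
  assumes "j \<le> m + 1" "d \<le> m + 1"
  shows "(\<lambda>n. \<epsilon> n j / \<delta> n ^ d) \<longlonglongrightarrow> 0"
proof -
  have "\<epsilon> n j / \<delta> n ^ d = \<epsilon> n j / \<delta> n ^ (m + 1) * \<delta> n ^ (m + 1 - d)" for n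
  proof -
    have "\<delta> n ^ (m + 1) = \<delta> n ^ d * \<delta> n ^ (m + 1 - d)" using assms(2) by (simp add: power_add[symmetric])
    then show ?thesis using \<delta>_nz[of n] by simp
  qed
  moreover have "(\<lambda>n. \<epsilon> n j / \<delta> n ^ (m + 1) * \<delta> n ^ (m + 1 - d)) \<longlonglongrightarrow> 0 * 0 ^ (m + 1 - d)"
    by (intro tendsto_intros \<epsilon>_small assms(1) \<delta>_tendsto)
  ultimately show ?thesis by simp
qed

text \<open>Up to \<open>o(\<delta>\<^sup>d)\<close>, \<open>scaled_ratio n j\<close> is the degree-\<open>d\<close> Taylor polynomial of \<open>exp\<close>
  at the phase, a polynomial in \<open>\<delta> n * j\<close>; an \<open>l\<close>-th difference of such a polynomial
  extracts \<open>l!\<close> times its \<open>l\<close>-th coefficient.\<close>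

lemma ndiff_scaled_ratio_tendsto:
  assumes "k + l \<le> d" "d \<le> m + 1"
  shows "(\<lambda>n. ndiff l (scaled_ratio n) k / \<delta> n ^ l) \<longlonglongrightarrow> (-1) ^ l * fact l * gauss_coeff \<kappa> l"
proof -
  define T where "T n = pcompose (exp_taylor d) (phase_poly n)" for n
  define R where "R n j = scaled_ratio n j - poly (T n) (\<delta> n * real j)" for n j
  have "degree (T n) \<le> d * m" for n
    using degree_pcompose_le[of "exp_taylor d" "phase_poly n"] degree_exp_taylor[of d] degree_phase_poly[of n]
    unfolding T_def by (meson mult_le_mono order_trans)
  moreover have "d * 1 \<le> d * m" using m_ge_2 by (intro mult_le_mono2) simp
  then have "l \<le> d * m" using assms(1) by linarith
  ultimately have main: "(\<lambda>n. ndiff l (\<lambda>j. poly (T n) (\<delta> n * real j)) k / \<delta> n ^ l)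
      \<longlonglongrightarrow> (-1) ^ l * fact l * coeff (pcompose (exp_taylor d) (monom \<kappa> 2)) l"
    unfolding T_def using coeff_phase_poly_tendsto
    by (intro ndiff_poly_scaled_tendsto[OF \<delta>_nz \<delta>_tendsto] tendsto_coeff_pcompose)
  have "(\<lambda>n. R n j / \<delta> n ^ d) \<longlonglongrightarrow> 0" if "j \<le> m + 1" for j
    unfolding R_def T_def scaled_ratio_eq_exp poly_pcompose poly_exp_taylor
    using exp_minus_taylor_scaled_tendsto_0[OF \<delta>_pos \<delta>_tendsto phase_div_\<delta>_tendsto \<epsilon>_small_power[OF that assms(2)]]
    by simp
  then have rem: "(\<lambda>n. ndiff l (R n) k / \<delta> n ^ l) \<longlonglongrightarrow> 0"
    using assms by (intro ndiff_scaled_tendsto_0[where l = l and d = d, OF \<delta>_nz \<delta>_tendsto]) auto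
  have "ndiff l (scaled_ratio n) k / \<delta> n ^ l
      = ndiff l (\<lambda>j. poly (T n) (\<delta> n * real j)) k / \<delta> n ^ l + ndiff l (R n) k / \<delta> n ^ l" for n
    unfolding add_divide_distrib[symmetric] ndiff_add[symmetric] R_def by simp
  then show ?thesis
    using tendsto_add[OF main rem] assms coeff_exp_taylor_pcompose_monom2[of l d \<kappa>] by simp
qed

definition jensen_F :: "nat \<Rightarrow> nat \<Rightarrow> real poly" where
  "jensen_F d n = (\<Sum>k\<le>d. monom (real (d choose k) * ndiff (d - k) (scaled_ratio n) k / \<delta> n ^ (d - k)) k)"

lemma coeff_jensen_F: "coeff (jensen_F d n) k
    = (if k \<le> d then real (d choose k) * ndiff (d - k) (scaled_ratio n) k / \<delta> n ^ (d - k) else 0)"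
  unfolding jensen_F_def by (auto simp: coeff_sum)

lemma degree_jensen_F: "degree (jensen_F d n) \<le> d"
  by (rule degree_le) (simp add: coeff_jensen_F)

lemma coeff_jensen_F_tendsto:
  assumes "d \<le> m + 1"
  shows "(\<lambda>n. coeff (jensen_F d n) k) \<longlonglongrightarrow> coeff (hermite \<kappa> d) k"
proof (cases "k \<le> d")
  case True
  have "real (d choose k) * ((-1) ^ (d - k) * fact (d - k) * gauss_coeff \<kappa> (d - k))
      = fact d / fact k * gauss_coeff \<kappa> (d - k)"
    using True by (cases "even (d - k)") (simp_all add: binomial_fact)
  moreover have "(\<lambda>n. real (d choose k) * (ndiff (d - k) (scaled_ratio n) k / \<delta> n ^ (d - k)))
      \<longlonglongrightarrow> real (d choose k) * ((-1) ^ (d - k) * fact (d - k) * gauss_coeff \<kappa> (d - k))"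
    using True assms by (intro tendsto_mult_left ndiff_scaled_ratio_tendsto) auto
  ultimately show ?thesis using True by (simp add: coeff_jensen_F coeff_hermite)
qed (simp add: coeff_jensen_F coeff_hermite)

lemma poly_jensen_J_rescaled:
  "poly (cpoly (jensen_J \<alpha> d n)) (of_real (exp (- A n) * \<delta> n) * u + of_real (- exp (- A n)))
     = of_real (\<alpha> n * \<delta> n ^ d) * poly (cpoly (jensen_F d n)) u"
proof -
  let ?c = "complex_of_real (exp (- A n))" and ?w = "complex_of_real (\<delta> n) * u"
  let ?a = "\<lambda>j. complex_of_real (scaled_ratio n j)"
  have term_J: "complex_of_real (real (d choose j) * \<alpha> (n + j)) * (?c * (?w - 1)) ^ j
      = of_real (\<alpha> n) * (of_nat (d choose j) * ?a j * (?w - 1) ^ j)" for j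
  proof -
    have "\<alpha> (n + j) * exp (- A n) ^ j = \<alpha> n * scaled_ratio n j"
      using \<alpha>_pos[of n] by (simp add: scaled_ratio_def exp_of_nat_mult[symmetric] mult.commute)
    then have "complex_of_real (\<alpha> (n + j)) * ?c ^ j = of_real (\<alpha> n) * ?a j"
      by (metis of_real_mult of_real_power)
    then show ?thesis by (simp add: power_mult_distrib ac_simps)
  qed
  have term_F: "complex_of_real (\<alpha> n) * (of_nat (d choose k) * (\<Sum>i\<le>d - k. (-1) ^ i * of_nat ((d - k) choose i) * ?a (k + i)) * ?w ^ k)
      = of_real (\<alpha> n * \<delta> n ^ d) * (complex_of_real (coeff (jensen_F d n) k) * u ^ k)"
    if "k \<le> d" for k
  proof -
    have dd: "\<delta> n ^ d / \<delta> n ^ (d - k) = \<delta> n ^ k" using that \<delta>_nz[of n] by (simp add: power_diff)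
    have "complex_of_real (\<alpha> n) * (of_nat (d choose k) * (\<Sum>i\<le>d - k. (-1) ^ i * of_nat ((d - k) choose i) * ?a (k + i)) * ?w ^ k)
        = complex_of_real (\<alpha> n * (real (d choose k) * ndiff (d - k) (scaled_ratio n) k) * \<delta> n ^ k) * u ^ k"
      by (simp add: power_mult_distrib ndiff_def)
    also have "\<dots> = complex_of_real (\<alpha> n * (real (d choose k) * ndiff (d - k) (scaled_ratio n) k)
        * (\<delta> n ^ d / \<delta> n ^ (d - k))) * u ^ k"
      by (simp only: dd)
    also have "\<dots> = of_real (\<alpha> n * \<delta> n ^ d) * (complex_of_real (coeff (jensen_F d n) k) * u ^ k)"
      using that by (simp add: coeff_jensen_F field_simps)
    finally show ?thesis .
  qed
  have "of_real (exp (- A n) * \<delta> n) * u + of_real (- exp (- A n)) = ?c * (?w - 1)"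
    by (simp add: algebra_simps)
  then have "poly (cpoly (jensen_J \<alpha> d n)) (of_real (exp (- A n) * \<delta> n) * u + of_real (- exp (- A n)))
      = of_real (\<alpha> n) * (\<Sum>j\<le>d. of_nat (d choose j) * ?a j * (?w - 1) ^ j)"
    by (simp only: poly_cpoly_jensen_J term_J sum_distrib_left)
  also have "\<dots> = of_real (\<alpha> n) * (\<Sum>k\<le>d. of_nat (d choose k)
      * (\<Sum>i\<le>d - k. (-1) ^ i * of_nat ((d - k) choose i) * ?a (k + i)) * ?w ^ k)"
    by (simp only: binomial_shift_sum)
  also have "\<dots> = (\<Sum>k\<le>d. of_real (\<alpha> n * \<delta> n ^ d) * (complex_of_real (coeff (jensen_F d n) k) * u ^ k))"
    unfolding sum_distrib_left[of "complex_of_real (\<alpha> n)"] by (intro sum.cong refl term_F) simp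
  also have "\<dots> = of_real (\<alpha> n * \<delta> n ^ d) * poly (cpoly (jensen_F d n)) u"
    by (simp add: sum_distrib_left poly_eq_sum_coeffs_upto[of _ d] degree_jensen_F)
  finally show ?thesis .
qed

lemma eventually_jensen_root_counts:
  assumes "d \<le> m + 1" "card (croots (hermite \<kappa> d)) = d"
  shows "\<forall>\<^sub>F n in sequentially. \<forall>P\<in>{jensen_J \<alpha> d n, jensen_K \<alpha> d n}.
     P \<noteq> 0 \<and> degree P = d \<and> card (croots P) = d
       \<and> card (croots P \<inter> \<real>) = card (croots (hermite \<kappa> d) \<inter> \<real>)"
proof -
  have "\<forall>\<^sub>F n in sequentially. jensen_F d n \<noteq> 0 \<and> degree (jensen_F d n) = d
      \<and> card (croots (jensen_F d n)) = d \<and> card (croots (jensen_F d n) \<inter> \<real>) = card (croots (hermite \<kappa> d) \<inter> \<real>)"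
    using eventually_roots_like_limit[OF hermite_neq_0, of \<kappa> d "jensen_F d"] assms
      degree_jensen_F coeff_jensen_F_tendsto by simp
  then show ?thesis
  proof eventually_elim
    case (elim n)
    let ?J = "jensen_J \<alpha> d n" and ?K = "jensen_K \<alpha> d n" and ?c = "exp (- A n)"
    let ?h = "\<lambda>u. complex_of_real (?c * \<delta> n) * u + of_real (- ?c)"
    have "?c * \<delta> n \<noteq> 0" "\<alpha> n * \<delta> n ^ d \<noteq> 0" using \<alpha>_pos[of n] \<delta>_nz[of n] by auto
    then have "croots ?J = ?h ` croots (jensen_F d n)"
      by (rule croots_affine[OF _ _ poly_jensen_J_rescaled])
    moreover note card_image_Int_Reals[OF inj_affine_of_real affine_of_real_in_Reals_iff,
        OF \<open>?c * \<delta> n \<noteq> 0\<close> \<open>?c * \<delta> n \<noteq> 0\<close>, of "- ?c" "croots (jensen_F d n)"]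
    ultimately have J: "card (croots ?J) = d" "card (croots ?J \<inter> \<real>) = card (croots (hermite \<kappa> d) \<inter> \<real>)"
      using elim by simp_all
    have J_deg: "degree ?J = d" "coeff ?J 0 \<noteq> 0"
      using \<alpha>_pos[of "n + d"] \<alpha>_pos[of n] by (auto simp: degree_jensen_J coeff_jensen_J)
    then have "?J \<noteq> 0" by (metis coeff_0)
    have K: "?K = reflect_poly ?J"
      using \<alpha>_pos[of "n + d"] by (simp add: jensen_K_eq_reflect_poly)
    then have "croots ?K = inverse ` croots ?J"
      using croots_reflect_poly[OF J_deg(2)] by simp
    then have "card (croots ?K) = d" "card (croots ?K \<inter> \<real>) = card (croots (hermite \<kappa> d) \<inter> \<real>)"
      using J card_image_Int_Reals[of inverse] by (auto simp: inj_on_def)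
    moreover have "?K \<noteq> 0" "degree ?K = d" using K J_deg by auto
    ultimately show ?case using J J_deg \<open>?J \<noteq> 0\<close> by auto
  qed
qed

lemma eventually_jensen_zeros:
  assumes \<kappa>: "\<kappa> \<in> {1, -1}" and "d \<le> m + 1"
  shows "\<forall>\<^sub>F n in sequentially. \<forall>P\<in>{jensen_J \<alpha> d n, jensen_K \<alpha> d n}. rsquarefree (cpoly P)
      \<and> (\<kappa> = -1 \<longrightarrow> croots P \<subseteq> \<real>) \<and> (\<kappa> = 1 \<longrightarrow> card (croots P \<inter> \<real>) = (if odd d then 1 else 0))"
proof -
  have "card (croots (hermite \<kappa> d)) = d"
    using \<kappa> card_croots_hermite_pos card_croots_hermite_neg by auto
  moreover have real: "card (croots (hermite \<kappa> d) \<inter> \<real>) = (if \<kappa> = -1 then d else if odd d then 1 else 0)"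
    using \<kappa> croots_hermite_neg_subset_Reals[of d] card_croots_hermite_neg[of d] croots_hermite_pos_Int_Reals[of d]
    by (auto simp: Int_absorb2)
  ultimately have "\<forall>\<^sub>F n in sequentially. \<forall>P\<in>{jensen_J \<alpha> d n, jensen_K \<alpha> d n}.
     P \<noteq> 0 \<and> degree P = d \<and> card (croots P) = d \<and> card (croots P \<inter> \<real>) = card (croots (hermite \<kappa> d) \<inter> \<real>)"
    by (intro eventually_jensen_root_counts \<open>d \<le> m + 1\<close>)
  then show ?thesis
  proof eventually_elim
    case (elim n)
    show ?case
    proof (intro ballI conjI impI)
      fix P assume "P \<in> {jensen_J \<alpha> d n, jensen_K \<alpha> d n}"
      then have P: "P \<noteq> 0" "degree P = d" "card (croots P) = d"
        "card (croots P \<inter> \<real>) = card (croots (hermite \<kappa> d) \<inter> \<real>)"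
        using elim by auto
      show "rsquarefree (cpoly P)" using P by (intro rsquarefree_cpoly_if_card_croots) auto
      show "croots P \<subseteq> \<real>" if "\<kappa> = -1"
        using P real that by (intro croots_subset_Reals_if_card_eq) auto
      show "card (croots P \<inter> \<real>) = (if odd d then 1 else 0)" if "\<kappa> = 1"
        using P(4) real that by simp
    qed
  qed
qed

end

lemma log_polynomialE:
  assumes "log_polynomial \<alpha> m A \<kappa> \<delta>"
  obtains g \<epsilon> where "log_poly_expansion \<alpha> A \<delta> \<kappa> m g \<epsilon>" "\<kappa> \<in> {1, -1}"
proof -
  obtain g where "m \<ge> 2" "\<kappa> \<in> {1, -1}" and \<alpha>_pos: "\<And>n. \<alpha> n > 0" and "\<And>n. \<delta> n > 0" "\<delta> \<longlonglongrightarrow> 0"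
    and g: "\<forall>k\<in>{3..m}. g k \<in> o[sequentially](\<lambda>n. \<delta> n ^ k)"
    and \<epsilon>: "\<forall>j\<in>{1..m+1}. (\<lambda>n. ln (\<alpha> (n + j) / \<alpha> n) - (A n * real j + \<kappa> * \<delta> n ^ 2 * real j ^ 2
        + (\<Sum>k=3..m. g k n * real j ^ k))) \<in> o[sequentially](\<lambda>n. \<delta> n ^ (m + 1))"
    using assms unfolding log_polynomial_def by blast
  define \<epsilon> where "\<epsilon> n j = ln (\<alpha> (n + j) / \<alpha> n)
      - (A n * real j + \<kappa> * \<delta> n ^ 2 * real j ^ 2 + (\<Sum>k=3..m. g k n * real j ^ k))" for n j
  have "(\<lambda>n. \<epsilon> n j / \<delta> n ^ (m + 1)) \<longlonglongrightarrow> 0" if "j \<le> m + 1" for j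
  proof (cases "j = 0")
    case True
    then have "\<epsilon> n j = 0" for n using \<alpha>_pos[of n] by (simp add: \<epsilon>_def zero_power)
    then show ?thesis by simp
  next
    case False
    then have "j \<in> {1..m+1}" using that by simp
    from smalloD_tendsto[OF \<epsilon>[rule_format, OF this]] show ?thesis unfolding \<epsilon>_def .
  qed
  moreover have "(\<lambda>n. g k n / \<delta> n ^ k) \<longlonglongrightarrow> 0" if "k \<in> {3..m}" for k
    using smalloD_tendsto[OF g[rule_format, OF that]] .
  ultimately have "log_poly_expansion \<alpha> A \<delta> \<kappa> m g \<epsilon>"
    using \<open>m \<ge> 2\<close> \<alpha>_pos \<open>\<And>n. \<delta> n > 0\<close> \<open>\<delta> \<longlonglongrightarrow> 0\<close> by unfold_locales (auto simp: \<epsilon>_def)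
  then show ?thesis using that \<open>\<kappa> \<in> {1, -1}\<close> by blast
qed

theorem theorem1p7:
  fixes \<alpha> A \<delta> :: "nat \<Rightarrow> real" and m :: nat and \<kappa> :: real
  assumes "log_polynomial \<alpha> m A \<kappa> \<delta>"
  shows "(\<kappa> = -1 \<longrightarrow> (\<forall>\<^sub>F n in sequentially. \<alpha> (n + 1) ^ 2 > \<alpha> n * \<alpha> (n + 2)))
       \<and> (\<kappa> = 1 \<longrightarrow> (\<forall>\<^sub>F n in sequentially. \<alpha> (n + 1) ^ 2 < \<alpha> n * \<alpha> (n + 2)))
       \<and> (\<forall>d. 1 \<le> d \<and> d \<le> m + 1 \<longrightarrow>
            (\<forall>\<^sub>F n in sequentially.
               (\<forall>P \<in> {jensen_J \<alpha> d n, jensen_K \<alpha> d n}.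
                  rsquarefree (map_poly complex_of_real P) \<and>
                  (\<kappa> = -1 \<longrightarrow>
                     (\<forall>z. poly (map_poly complex_of_real P) z = 0 \<longrightarrow> z \<in> \<real>)) \<and>
                  (\<kappa> = 1 \<longrightarrow>
                     card {z. poly (map_poly complex_of_real P) z = 0 \<and> z \<in> \<real>}
                       = (if odd d then 1 else 0)))))"
proof -
  obtain g \<epsilon> where "log_poly_expansion \<alpha> A \<delta> \<kappa> m g \<epsilon>" and \<kappa>: "\<kappa> \<in> {1, -1}"
    using log_polynomialE[OF assms] .
  interpret log_poly_expansion \<alpha> A \<delta> \<kappa> m g \<epsilon> by fact
  have real_zeros: "{z. poly (cpoly P) z = 0 \<and> z \<in> \<real>} = croots P \<inter> \<real>" for P
    by blast
  show ?thesis
  proof (intro conjI impI allI)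
    show "\<forall>\<^sub>F n in sequentially. \<alpha> (n + 1) ^ 2 > \<alpha> n * \<alpha> (n + 2)" if "\<kappa> = -1"
      using that by (intro eventually_strictly_log_concave) simp
    show "\<forall>\<^sub>F n in sequentially. \<alpha> (n + 1) ^ 2 < \<alpha> n * \<alpha> (n + 2)" if "\<kappa> = 1"
      using that by (intro eventually_strictly_log_convex) simp
    fix d :: nat assume "1 \<le> d \<and> d \<le> m + 1"
    then show "\<forall>\<^sub>F n in sequentially. \<forall>P\<in>{jensen_J \<alpha> d n, jensen_K \<alpha> d n}.
        rsquarefree (cpoly P) \<and> (\<kappa> = -1 \<longrightarrow> (\<forall>z. poly (cpoly P) z = 0 \<longrightarrow> z \<in> \<real>))
        \<and> (\<kappa> = 1 \<longrightarrow> card {z. poly (cpoly P) z = 0 \<and> z \<in> \<real>} = (if odd d then 1 else 0))"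
      using eventually_jensen_zeros[OF \<kappa>, of d] by (auto simp: real_zeros subset_eq elim!: eventually_mono)
  qed
qed

end
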